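(* Let $R$ be a unital von Neumann regular ring and $E$ a directed graph. Let $S=M(\mathbb{Z},I)\cup\{0\}$ and $w$ a canonical weight mapping on $E$. Then $L_R(E)$, with the canonical $S$-grading determined by $w$, is graded von Neumann regular.
   Context: Directed graph $E=(E^0,E^1,\mathrm{r},\mathrm{s})$ (arbitrary, possibly infinite); paths $E^*$ (vertices as length-$0$ paths); $\mathrm{Reg}(E)$ = vertices $v$ with $\mathrm{s}^{-1}(v)$ nonempty finite. $L_R(E)$ is the $R$-algebra generated by $E^0$, $E^1$, $\{\alpha^*\}$ ($R$ commuting with generators) with relations $vv'=\delta_{v,v'}v$; $\mathrm{s}(\alpha)\alpha=\alpha\mathrm{r}(\alpha)=\alpha$, $\mathrm{r}(\alpha)\alpha^*=\alpha^*\mathrm{s}(\alpha)=\alpha^*$; $\alpha^*\alpha'=\delta_{\alpha,\alpha'}\mathrm{r}(\alpha)$; $\sum_{\mathrm{s}(\alpha)=v}\alpha\alpha^*=v$ for $v\in\mathrm{Reg}(E)$. $M(\mathbb{Z},I)=I\times\mathbb{Z}\times I$, $(i,a,j)(k,b,l)=(i,a+b,l)$ if $j=k$, else undefined; $S=M(\mathbb{Z},I)\cup\{0\}$, undefined products $0$, $0$ absorbing; $(i,a,j)^{-1}=(j,-a,i)$. Canonical weight mapping: vertices get weights $(i,0,i)$, edges $(i,1,j)$, $w(\alpha^* )=w(\alpha)^{-1}$, $w(\mathrm{s}(\alpha))w(\alpha)=w(\alpha)=w(\alpha)w(\mathrm{r}(\alpha))$; for each nonzero idempotent $f$, edges with source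 of weight $f$ share a weight and edges with range of weight $f$ share a weight; extended multiplicatively with $w(\mu\eta^* )=w(\mu)w(\eta)^{-1}$. Canonical grading: $(L_R(E))_s$ = $R$-span of $\mu\eta^*$, $\mathrm{r}(\mu)=\mathrm{r}(\eta)$, $w(\mu\eta^* )=s$; $(L_R(E))_0=0$. A graded ring $A=\bigoplus_sA_s$ is graded von Neumann regular if $x\in xAx$ for every $x\in\bigcup_sA_s$. *)

theory Defs
  imports Main
begin

text \<open>None represents 0; Some (i,a,j) represents (i,a,j).\<close>
type_synonym 'i sg = "('i \<times> int \<times> 'i) option"

fun smult :: "'i sg \<Rightarrow> 'i sg \<Rightarrow> 'i sg" where
  "smult (Some (i, a, j)) (Some (k, b, l)) = (if j = k then Some (i, a + b, l) else None)"
| "smult _ _ = None"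

fun sinv :: "'i sg \<Rightarrow> 'i sg" where
  "sinv (Some (i, a, j)) = Some (j, - a, i)"
| "sinv None = None"

definition vn_regular_ring :: "'r::ring_1 itself \<Rightarrow> bool" where
  "vn_regular_ring _ = (\<forall>a::'r. \<exists>b. a * b * a = a)"

text \<open>A directed graph is given by a vertex set V0, an edge set E1 and
  range/source maps rg, sc (assumed to map E1 into V0).\<close>

definition Reg :: "'v set \<Rightarrow> 'e set \<Rightarrow> ('e \<Rightarrow> 'v) \<Rightarrow> 'v set" where
  "Reg V0 E1 sc = {v \<in> V0. {e \<in> E1. sc e = v} \<noteq> {} \<and> finite {e \<in> E1. sc e = v}}"

text \<open>A path is a pair (v, es): if es = [] it is the vertex v (length 0),
  otherwise the edge sequence es starting at v.\<close>
definition is_path :: "'v set \<Rightarrow> 'e set \<Rightarrow> ('e \<Rightarrow> 'v) \<Rightarrow> ('e \<Rightarrow> 'v) \<Rightarrow> 'v \<times> 'e list \<Rightarrow> bool" where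
  "is_path V0 E1 rg sc p = (case p of (v, es) \<Rightarrow>
     v \<in> V0 \<and> set es \<subseteq> E1 \<and> (es \<noteq> [] \<longrightarrow> sc (hd es) = v) \<and>
     (\<forall>i. Suc i < length es \<longrightarrow> rg (es ! i) = sc (es ! Suc i)))"

definition prange :: "('e \<Rightarrow> 'v) \<Rightarrow> 'v \<times> 'e list \<Rightarrow> 'v" where
  "prange rg p = (case p of (v, es) \<Rightarrow> if es = [] then v else rg (last es))"

definition canonical_weight ::
  "'v set \<Rightarrow> 'e set \<Rightarrow> ('e \<Rightarrow> 'v) \<Rightarrow> ('e \<Rightarrow> 'v) \<Rightarrow> ('v \<Rightarrow> 'i sg) \<Rightarrow> ('e \<Rightarrow> 'i sg) \<Rightarrow> bool" where
  "canonical_weight V0 E1 rg sc wv we \<longleftrightarrow>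
     (\<forall>v\<in>V0. \<exists>i. wv v = Some (i, 0, i)) \<and>
     (\<forall>e\<in>E1. \<exists>i j. we e = Some (i, 1, j)) \<and>
     (\<forall>e\<in>E1. smult (wv (sc e)) (we e) = we e \<and> smult (we e) (wv (rg e)) = we e) \<and>
     (\<forall>f. f \<noteq> None \<and> smult f f = f \<longrightarrow>
        (\<forall>e\<in>E1. \<forall>e'\<in>E1. wv (sc e) = f \<and> wv (sc e') = f \<longrightarrow> we e = we e') \<and>
        (\<forall>e\<in>E1. \<forall>e'\<in>E1. wv (rg e) = f \<and> wv (rg e') = f \<longrightarrow> we e = we e'))"

definition pweight :: "('v \<Rightarrow> 'i sg) \<Rightarrow> ('e \<Rightarrow> 'i sg) \<Rightarrow> 'v \<times> 'e list \<Rightarrow> 'i sg" where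
  "pweight wv we p = (case p of (v, es) \<Rightarrow>
     if es = [] then wv v else foldr (\<lambda>e acc. smult (we e) acc) (butlast es) (we (last es)))"

text \<open>Generators: vertices, real edges, ghost edges (alpha^*).  Elements of the
  free (unital) R-algebra with R commuting with generators are finitely supported
  functions from words to R; multiplication is convolution.\<close>
datatype ('v, 'e) gen = Vx 'v | Ed 'e | Gh 'e

definition gen_in :: "'v set \<Rightarrow> 'e set \<Rightarrow> ('v, 'e) gen \<Rightarrow> bool" where
  "gen_in V0 E1 g = (case g of Vx v \<Rightarrow> v \<in> V0 | Ed e \<Rightarrow> e \<in> E1 | Gh e \<Rightarrow> e \<in> E1)"

definition fmono :: "'r::zero \<Rightarrow> 'a list \<Rightarrow> ('a list \<Rightarrow> 'r)" where
  "fmono c u = (\<lambda>w. if w = u then c else 0)"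

definition fadd :: "('a list \<Rightarrow> 'r::plus) \<Rightarrow> ('a list \<Rightarrow> 'r) \<Rightarrow> ('a list \<Rightarrow> 'r)" where
  "fadd f g = (\<lambda>w. f w + g w)"

definition fdiff :: "('a list \<Rightarrow> 'r::minus) \<Rightarrow> ('a list \<Rightarrow> 'r) \<Rightarrow> ('a list \<Rightarrow> 'r)" where
  "fdiff f g = (\<lambda>w. f w - g w)"

definition fmult :: "('a list \<Rightarrow> 'r::semiring_0) \<Rightarrow> ('a list \<Rightarrow> 'r) \<Rightarrow> ('a list \<Rightarrow> 'r)" where
  "fmult f g = (\<lambda>w. \<Sum>k\<le>length w. f (take k w) * g (drop k w))"

text \<open>Defining relations of L_R(E), written as elements that are set to 0.\<close>
definition LPA_rels :: "'v set \<Rightarrow> 'e set \<Rightarrow> ('e \<Rightarrow> 'v) \<Rightarrow> ('e \<Rightarrow> 'v) \<Rightarrow>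
    ((('v, 'e) gen list \<Rightarrow> 'r::ring_1) set)" where
  "LPA_rels V0 E1 rg sc =
     {fdiff (fmono 1 [Vx v, Vx v']) (if v = v' then fmono 1 [Vx v] else (\<lambda>_. 0)) | v v'. v \<in> V0 \<and> v' \<in> V0}
   \<union> {fdiff (fmono 1 [Vx (sc e), Ed e]) (fmono 1 [Ed e]) | e. e \<in> E1}
   \<union> {fdiff (fmono 1 [Ed e, Vx (rg e)]) (fmono 1 [Ed e]) | e. e \<in> E1}
   \<union> {fdiff (fmono 1 [Vx (rg e), Gh e]) (fmono 1 [Gh e]) | e. e \<in> E1}
   \<union> {fdiff (fmono 1 [Gh e, Vx (sc e)]) (fmono 1 [Gh e]) | e. e \<in> E1}
   \<union> {fdiff (fmono 1 [Gh e, Ed e']) (if e = e' then fmono 1 [Vx (rg e)] else (\<lambda>_. 0)) | e e'. e \<in> E1 \<and> e' \<in> E1}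
   \<union> {fdiff (\<lambda>w. \<Sum>e\<in>{e \<in> E1. sc e = v}. fmono 1 [Ed e, Gh e] w) (fmono 1 [Vx v]) | v. v \<in> Reg V0 E1 sc}"

inductive_set LPA_ideal :: "'v set \<Rightarrow> 'e set \<Rightarrow> ('e \<Rightarrow> 'v) \<Rightarrow> ('e \<Rightarrow> 'v) \<Rightarrow>
    ((('v, 'e) gen list \<Rightarrow> 'r::ring_1) set)"
  for V0 E1 rg sc where
  zero: "(\<lambda>_. 0) \<in> LPA_ideal V0 E1 rg sc"
| gen: "\<lbrakk> g \<in> LPA_rels V0 E1 rg sc; \<forall>x\<in>set u. gen_in V0 E1 x; \<forall>x\<in>set u'. gen_in V0 E1 x \<rbrakk>
        \<Longrightarrow> fmult (fmult (fmono c u) g) (fmono c' u') \<in> LPA_ideal V0 E1 rg sc"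
| add: "\<lbrakk> f \<in> LPA_ideal V0 E1 rg sc; g \<in> LPA_ideal V0 E1 rg sc \<rbrakk>
        \<Longrightarrow> fadd f g \<in> LPA_ideal V0 E1 rg sc"

text \<open>Representatives of elements of the (non-unital) algebra L_R(E): finitely
  supported R-combinations of nonempty words in the generators.  L_R(E) is the
  quotient of this set modulo LPA_ideal.\<close>
definition LPA_carrier :: "'v set \<Rightarrow> 'e set \<Rightarrow> ((('v, 'e) gen list \<Rightarrow> 'r::ring_1) set)" where
  "LPA_carrier V0 E1 = {f. finite {w. f w \<noteq> 0} \<and>
     (\<forall>w. f w \<noteq> 0 \<longrightarrow> w \<noteq> [] \<and> (\<forall>x\<in>set w. gen_in V0 E1 x))}"

definition pword :: "'v \<times> 'e list \<Rightarrow> ('v, 'e) gen list" where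
  "pword p = (case p of (v, es) \<Rightarrow> if es = [] then [Vx v] else map Ed es)"

definition pghost :: "'v \<times> 'e list \<Rightarrow> ('v, 'e) gen list" where
  "pghost p = (case p of (v, es) \<Rightarrow> if es = [] then [Vx v] else rev (map Gh es))"

text \<open>Representatives of the homogeneous component (L_R(E))_sigma of the canonical grading:
  R-span of mu eta^* with r(mu) = r(eta) and w(mu eta^*) = sigma; the 0-component is 0.\<close>
inductive_set LPA_hom :: "'v set \<Rightarrow> 'e set \<Rightarrow> ('e \<Rightarrow> 'v) \<Rightarrow> ('e \<Rightarrow> 'v) \<Rightarrow>
    ('v \<Rightarrow> 'i sg) \<Rightarrow> ('e \<Rightarrow> 'i sg) \<Rightarrow> 'i sg \<Rightarrow> ((('v, 'e) gen list \<Rightarrow> 'r::ring_1) set)"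
  for V0 E1 rg sc wv we \<sigma> where
  zero: "(\<lambda>_. 0) \<in> LPA_hom V0 E1 rg sc wv we \<sigma>"
| mono: "\<lbrakk> \<sigma> \<noteq> None; is_path V0 E1 rg sc \<mu>; is_path V0 E1 rg sc \<eta>; prange rg \<mu> = prange rg \<eta>;
          smult (pweight wv we \<mu>) (sinv (pweight wv we \<eta>)) = \<sigma>;
          h \<in> LPA_hom V0 E1 rg sc wv we \<sigma> \<rbrakk>
        \<Longrightarrow> fadd (fmono c (pword \<mu> @ pghost \<eta>)) h \<in> LPA_hom V0 E1 rg sc wv we \<sigma>"

end

(*
  A homogeneous element of the canonical S-grading is a finite sum x = \<Sum> c_k \<mu>_k \<eta>_k^* with
  r(\<mu>_k) = r(\<eta>_k), and the integer component n of its degree forces |\<mu>_k| - |\<eta>_k| = n for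
  every k.  Let F be the finite set of edges occurring in x and, for a vertex w,
  g_w = w - \<Sum>{e e^* | e \<in> F, s(e) = w}; this is an idempotent annihilated by the F-edges
  leaving w, and no Cuntz-Krieger relation is needed to define it.  Inserting
  r(\<mu>) = g_r(\<mu>) + \<Sum> e e^* repeatedly expands every \<mu>_k \<eta>_k^* into terms
  (\<mu> \<kappa>) p (\<eta> \<kappa>)^* over F-extensions \<kappa>, padded so that all rows have a common length
  bound M_r and all columns M_c with M_r - M_c = n; here p = g at the end of the path below
  the bound and p = 1 at it.  The elements (\<mu> \<kappa>) p and p (\<eta> \<kappa>)^* multiply like matrix
  units, so x is the image of a finite matrix A over R.  Matrices over a von Neumann
  regular ring are von Neumann regular, and a B with A B A = A yields y with x y x = x.
*)

theory Submission
  imports Defs "HOL-Library.Function_Algebras"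
begin

section \<open>Von Neumann regularity of finite matrices\<close>

definition matmul :: "'k set \<Rightarrow> ('a \<Rightarrow> 'k \<Rightarrow> 'r::semiring_0) \<Rightarrow> ('k \<Rightarrow> 'b \<Rightarrow> 'r) \<Rightarrow> 'a \<Rightarrow> 'b \<Rightarrow> 'r" where
  "matmul K X Y = (\<lambda>i j. \<Sum>k\<in>K. X i k * Y k j)"

lemma matmul_assoc: "matmul K (matmul L X Y) Z = matmul L X (matmul K Y (Z :: _ \<Rightarrow> _ \<Rightarrow> 'r::semiring_0))"
  unfolding matmul_def
  by (auto simp: fun_eq_iff sum_distrib_left sum_distrib_right mult.assoc intro: sum.swap)

lemma matmul_add_right: "matmul K X (Y + Z) = matmul K X Y + matmul K X (Z :: _ \<Rightarrow> _ \<Rightarrow> 'r::ring)"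
  unfolding matmul_def by (simp add: fun_eq_iff distrib_left sum.distrib)
lemma matmul_add_left: "matmul K (X + Y) Z = matmul K X Z + matmul K Y (Z :: _ \<Rightarrow> _ \<Rightarrow> 'r::ring)"
  unfolding matmul_def by (simp add: fun_eq_iff distrib_right sum.distrib)
lemma matmul_diff_right: "matmul K X (Y - Z) = matmul K X Y - matmul K X (Z :: _ \<Rightarrow> _ \<Rightarrow> 'r::ring)"
  unfolding matmul_def by (simp add: fun_eq_iff right_diff_distrib sum_subtractf)
lemma matmul_diff_left: "matmul K (X - Y) Z = matmul K X Z - matmul K Y (Z :: _ \<Rightarrow> _ \<Rightarrow> 'r::ring)"
  unfolding matmul_def by (simp add: fun_eq_iff left_diff_distrib sum_subtractf)

lemma matmul_correction_identity:
  fixes A :: "'a \<Rightarrow> 'c \<Rightarrow> 'r::ring" and B W :: "'c \<Rightarrow> 'a \<Rightarrow> 'r" and Rs :: "'a set" and Cs :: "'c set"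
  defines "Z \<equiv> A - matmul Rs (matmul Cs A B) A"
  shows "matmul Rs (matmul Cs A (B + W - matmul Cs (matmul Rs B A) W - matmul Rs W (matmul Cs A B)
            + matmul Rs (matmul Cs (matmul Rs B A) W) (matmul Cs A B))) A
         = matmul Rs (matmul Cs A B) A + matmul Rs (matmul Cs Z W) Z"
  unfolding Z_def
  by (simp add: matmul_add_right matmul_add_left matmul_diff_right matmul_diff_left matmul_assoc algebra_simps)

definition regular_on :: "'a set \<Rightarrow> 'c set \<Rightarrow> ('a \<Rightarrow> 'c \<Rightarrow> 'r::ring) \<Rightarrow> ('c \<Rightarrow> 'a \<Rightarrow> 'r) \<Rightarrow> bool" where
  "regular_on Rs Cs A B \<longleftrightarrow> (\<forall>i\<in>Rs. \<forall>j\<in>Cs. matmul Rs (matmul Cs A B) A i j = A i j)"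

lemma regular_on_correction:
  fixes A :: "'a \<Rightarrow> 'c \<Rightarrow> 'r::ring"
  assumes "regular_on Rs Cs (A - matmul Rs (matmul Cs A B) A) W"
  shows "regular_on Rs Cs A (B + W - matmul Cs (matmul Rs B A) W - matmul Rs W (matmul Cs A B)
            + matmul Rs (matmul Cs (matmul Rs B A) W) (matmul Cs A B))"
  unfolding regular_on_def
proof (intro ballI)
  fix i j assume ij: "i \<in> Rs" "j \<in> Cs"
  let ?Z = "A - matmul Rs (matmul Cs A B) A"
  let ?F = "matmul Rs (matmul Cs A (B + W - matmul Cs (matmul Rs B A) W - matmul Rs W (matmul Cs A B)
            + matmul Rs (matmul Cs (matmul Rs B A) W) (matmul Cs A B))) A"
  have eq: "?F = matmul Rs (matmul Cs A B) A + matmul Rs (matmul Cs ?Z W) ?Z"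
    by (rule matmul_correction_identity[where A=A and B=B and W=W and Rs=Rs and Cs=Cs])
  have "?F i j = (matmul Rs (matmul Cs A B) A + matmul Rs (matmul Cs ?Z W) ?Z) i j" by (simp only: eq)
  also have "\<dots> = matmul Rs (matmul Cs A B) A i j + matmul Rs (matmul Cs ?Z W) ?Z i j" by simp
  also have "matmul Rs (matmul Cs ?Z W) ?Z i j = ?Z i j" using assms ij by (simp add: regular_on_def)
  also have "matmul Rs (matmul Cs A B) A i j + ?Z i j = A i j" by simp
  finally show "?F i j = A i j" .
qed

lemma regular_on_by_correction:
  fixes A :: "'a \<Rightarrow> 'c \<Rightarrow> 'r::ring"
  assumes "regular_on Rs Cs (A - matmul Rs (matmul Cs A B) A) W"
  shows "\<exists>B'. regular_on Rs Cs A B'"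
  using regular_on_correction[OF assms] by blast

lemma column_regular:
  assumes vn: "vn_regular_ring TYPE('r::ring_1)" and fin: "finite Rs"
  shows "\<exists>B. regular_on Rs {c} (A :: 'a \<Rightarrow> 'c \<Rightarrow> 'r) B"
  using fin
proof (induction Rs arbitrary: A rule: finite_induct)
  case empty
  then show ?case by (simp add: regular_on_def)
next
  case (insert r Rs)
  obtain B1 where B1: "regular_on Rs {c} A B1" using insert.IH by blast
  define B where "B = (\<lambda>k l. if l \<in> Rs then B1 k l else 0)"
  define Z where "Z = A - matmul (insert r Rs) (matmul {c} A B) A"
  have Z0: "Z i c = 0" if i: "i \<in> Rs" for i
  proof -
    have "matmul (insert r Rs) (matmul {c} A B) A i c = (\<Sum>l\<in>insert r Rs. A i c * B c l * A l c)"
      by (simp add: matmul_def)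
    also have "\<dots> = (\<Sum>l\<in>Rs. A i c * B1 c l * A l c)"
      using insert.hyps by (simp add: B_def)
    also have "\<dots> = A i c" using B1 i by (simp add: regular_on_def matmul_def)
    finally show ?thesis by (simp add: Z_def)
  qed
  obtain s where s: "Z r c * s * Z r c = Z r c" using vn unfolding vn_regular_ring_def by blast
  define W where "W = (\<lambda>(k::'c) l. if l = r then s else (0::'r))"
  have "regular_on (insert r Rs) {c} Z W"
    unfolding regular_on_def
  proof (intro ballI)
    fix i j assume i: "i \<in> insert r Rs" and j: "j \<in> {c}"
    have "matmul (insert r Rs) (matmul {c} Z W) Z i j = (\<Sum>l\<in>insert r Rs. Z i c * W c l * Z l c)"
      using j by (simp add: matmul_def)
    also have "\<dots> = Z i c * s * Z r c"
    proof -
      have "(\<Sum>l\<in>Rs. Z i c * W c l * Z l c) = 0"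
        using insert.hyps by (intro sum.neutral) (auto simp: W_def)
      then show ?thesis using insert.hyps by (simp add: W_def)
    qed
    also have "\<dots> = Z i j" using i j s Z0 by auto
    finally show "matmul (insert r Rs) (matmul {c} Z W) Z i j = Z i j" .
  qed
  then show ?case using regular_on_by_correction[of "insert r Rs" "{c}" A B W] by (simp add: Z_def)
qed

lemma matrix_regular:
  assumes vn: "vn_regular_ring TYPE('r::ring_1)" and finR: "finite Rs" and finC: "finite Cs"
  shows "\<exists>B. regular_on Rs Cs (A :: 'a \<Rightarrow> 'c \<Rightarrow> 'r) B"
  using finC
proof (induction Cs arbitrary: A rule: finite_induct)
  case empty
  then show ?case by (simp add: regular_on_def)
next
  case (insert c Cs)
  obtain B1 where B1: "regular_on Rs Cs A B1" using insert.IH by blast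
  define B where "B = (\<lambda>k l. if k \<in> Cs then B1 k l else 0)"
  define Z where "Z = A - matmul Rs (matmul (insert c Cs) A B) A"
  have AB: "matmul (insert c Cs) A B = matmul Cs A B1"
    using insert.hyps by (simp add: matmul_def B_def fun_eq_iff)
  have Z0: "Z i j = 0" if i: "i \<in> Rs" and j: "j \<in> Cs" for i j
    using B1 i j by (simp add: Z_def AB regular_on_def)
  obtain W where W: "regular_on Rs {c} Z W" using column_regular[OF vn finR, where c=c and A=Z] by blast
  have ZW: "matmul (insert c Cs) Z W i l = matmul {c} Z W i l" if i: "i \<in> Rs" for i l
    using insert.hyps Z0[OF i] by (simp add: matmul_def)
  have "regular_on Rs (insert c Cs) Z W"
    unfolding regular_on_def
  proof (intro ballI)
    fix i j assume i: "i \<in> Rs" and j: "j \<in> insert c Cs"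
    have "matmul Rs (matmul (insert c Cs) Z W) Z i j = matmul Rs (matmul {c} Z W) Z i j"
      using ZW[OF i] by (simp add: matmul_def)
    also have "\<dots> = Z i j"
    proof (cases "j = c")
      case True then show ?thesis using W i by (simp add: regular_on_def)
    next
      case False
      then have jC: "j \<in> Cs" using j by simp
      have "matmul Rs (matmul {c} Z W) Z i j = (\<Sum>l\<in>Rs. matmul {c} Z W i l * Z l j)" by (simp add: matmul_def)
      also have "\<dots> = 0" using Z0 jC by simp
      finally show ?thesis using Z0[OF i jC] by simp
    qed
    finally show "matmul Rs (matmul (insert c Cs) Z W) Z i j = Z i j" .
  qed
  then show ?case using regular_on_by_correction[of Rs "insert c Cs" A B W] by (simp add: Z_def)
qed

section \<open>Noncommutative series on words\<close>

lemma fmult_assoc: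
  fixes f g h :: "'a list \<Rightarrow> 'r::ring_1"
  shows "fmult (fmult f g) h = fmult f (fmult g h)"
proof
  fix w :: "'a list"
  define n where "n = length w"
  define G where "G = (\<lambda>i j. f (take i w) * g (take j (drop i w)) * h (drop (i+j) w))"
  have L: "fmult (fmult f g) h w = (\<Sum>k\<le>n. \<Sum>i\<le>k. G i (k - i))"
    unfolding fmult_def n_def
    by (auto simp: sum_distrib_right G_def min_def drop_take intro!: sum.cong)
  have R: "fmult f (fmult g h) w = (\<Sum>i\<le>n. \<Sum>j\<le>n-i. G i j)"
    unfolding fmult_def n_def
    by (auto simp: sum_distrib_left G_def mult.assoc add.commute intro!: sum.cong)
  have "(\<Sum>i\<le>n. \<Sum>j\<le>n-i. G i j) = (\<Sum>(i,j)\<in>Sigma {..n} (\<lambda>i. {..n-i}). G i j)"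
    by (simp add: sum.Sigma)
  also have "Sigma {..n} (\<lambda>i. {..n-i}) = {(i,j). i+j \<le> n}" by auto
  also have "(\<Sum>(i,j)\<in>{(i,j). i+j \<le> n}. G i j) = (\<Sum>k\<le>n. \<Sum>i\<le>k. G i (k - i))"
    by (rule sum.triangle_reindex_eq)
  finally show "fmult (fmult f g) h w = fmult f (fmult g h) w" using L R by simp
qed

(* Functions already carry the pointwise ring structure of Function_Algebras, used for
   matrices above, so the convolution ring lives on a wrapper type. *)
datatype ('g, 'r) nc_series = Series (coeff: "'g list \<Rightarrow> 'r")

lemma nc_series_eqI: "(\<And>w. coeff f w = coeff g w) \<Longrightarrow> f = g"
  by (cases f; cases g) auto

lemma fmult_one_left:
  "fmult (\<lambda>w. if w = [] then 1 else 0) f = (f :: 'a list \<Rightarrow> 'r::ring_1)"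
proof
  fix w
  have "fmult (\<lambda>w. if w = [] then 1 else 0) f w = (\<Sum>k\<le>length w. if k = 0 then f w else 0)"
    unfolding fmult_def by (intro sum.cong) auto
  then show "fmult (\<lambda>w. if w = [] then 1 else 0) f w = f w" by simp
qed

lemma fmult_one_right:
  "fmult f (\<lambda>w. if w = [] then 1 else 0) = (f :: 'a list \<Rightarrow> 'r::ring_1)"
proof
  fix w
  have "fmult f (\<lambda>w. if w = [] then 1 else 0) w = (\<Sum>k\<le>length w. if k = length w then f w else 0)"
    unfolding fmult_def by (intro sum.cong) auto
  then show "fmult f (\<lambda>w. if w = [] then 1 else 0) w = f w" by simp
qed

instantiation nc_series :: (type, ring_1) ring_1
begin
definition zero_nc_series_def: "0 = Series (\<lambda>_. 0)"
definition one_nc_series_def: "1 = Series (\<lambda>w. if w = [] then 1 else 0)"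
definition plus_nc_series_def: "f + g = Series (\<lambda>w. coeff f w + coeff g w)"
definition minus_nc_series_def: "f - g = Series (\<lambda>w. coeff f w - coeff g w)"
definition uminus_nc_series_def: "- f = Series (\<lambda>w. - coeff f w)"
definition times_nc_series_def: "f * g = Series (fmult (coeff f) (coeff g))"
instance
proof
  fix a b c :: "('a,'b) nc_series"
  show "a * b * c = a * (b * c)" by (simp add: times_nc_series_def fmult_assoc)
  show "a + b + c = a + (b + c)" by (simp add: plus_nc_series_def add.assoc)
  show "a + b = b + a" by (simp add: plus_nc_series_def add.commute)
  show "0 + a = a" by (rule nc_series_eqI) (simp add: plus_nc_series_def zero_nc_series_def)
  show "- a + a = 0" by (simp add: plus_nc_series_def zero_nc_series_def uminus_nc_series_def)
  show "a - b = a + - b" by (simp add: plus_nc_series_def minus_nc_series_def uminus_nc_series_def)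
  show "(a + b) * c = a * c + b * c"
    by (simp add: plus_nc_series_def times_nc_series_def fmult_def distrib_right sum.distrib)
  show "a * (b + c) = a * b + a * c"
    by (simp add: plus_nc_series_def times_nc_series_def fmult_def distrib_left sum.distrib)
  show "1 * a = a" by (rule nc_series_eqI) (simp add: one_nc_series_def times_nc_series_def fmult_one_left)
  show "a * 1 = a" by (rule nc_series_eqI) (simp add: one_nc_series_def times_nc_series_def fmult_one_right)
  show "(0::('a,'b) nc_series) \<noteq> 1" by (simp add: zero_nc_series_def one_nc_series_def fun_eq_iff)
qed
end

lemma coeff_0[simp]: "coeff 0 w = 0" by (simp add: zero_nc_series_def)
lemma coeff_add[simp]: "coeff (f + g) w = coeff f w + coeff g w" by (simp add: plus_nc_series_def)
lemma coeff_diff[simp]: "coeff (f - g) w = coeff f w - coeff g w" by (simp add: minus_nc_series_def)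
lemma coeff_neg[simp]: "coeff (- f) w = - coeff f w" by (simp add: uminus_nc_series_def)
lemma coeff_mult: "coeff (f * g) = fmult (coeff f) (coeff g)" by (simp add: times_nc_series_def)
lemma coeff_sum[simp]: "coeff (sum F A) w = (\<Sum>a\<in>A. coeff (F a) w)"
  by (induction A rule: infinite_finite_induct) auto

definition monom :: "'r::ring_1 \<Rightarrow> 'g list \<Rightarrow> ('g,'r) nc_series" where
  "monom c u = Series (fmono c u)"

lemma coeff_monom[simp]: "coeff (monom c u) = fmono c u" by (simp add: monom_def)

lemma fmult_fmono: "fmult (fmono c u) (fmono d v) = fmono (c * d) (u @ v)"
proof
  fix w
  show "fmult (fmono c u) (fmono d v) w = fmono (c * d) (u @ v) w"
  proof (cases "w = u @ v")
    case True
    have "\<And>k. k \<le> length w \<Longrightarrow> take k w = u \<Longrightarrow> k = length u"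
      by (metis length_take min_absorb2)
    then have "fmult (fmono c u) (fmono d v) w = (\<Sum>k\<le>length w. if k = length u then c * d else 0)"
      unfolding fmult_def fmono_def using True by (intro sum.cong) auto
    then show ?thesis using True by (simp add: fmono_def)
  next
    case False
    then have "fmult (fmono c u) (fmono d v) w = (\<Sum>k\<le>length w. 0)"
      unfolding fmult_def fmono_def using False
      by (intro sum.cong refl) (auto simp del: append_take_drop_id simp: append_take_drop_id[symmetric])
    then show ?thesis using False by (simp add: fmono_def)
  qed
qed

lemma monom_mult: "monom c u * monom d v = monom (c * d) (u @ v)"
  by (simp add: monom_def times_nc_series_def fmult_fmono)

lemma monom_0[simp]: "monom 0 u = 0"
  by (rule nc_series_eqI) (simp add: fmono_def)

lemma monom_add: "monom (c + d) u = monom c u + monom d u"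
  by (rule nc_series_eqI) (simp add: fmono_def)

lemma monom_neg: "monom (- c) u = - monom c u"
  by (rule nc_series_eqI) (simp add: fmono_def)

lemma monom_Nil_1: "monom 1 [] = 1"
  by (rule nc_series_eqI) (simp add: fmono_def one_nc_series_def)

lemma fmult_fmono_Nil_right: "fmult f (fmono b []) = (\<lambda>w. f w * (b::'r::ring_1))"
proof
  fix w
  have "fmult f (fmono b []) w = (\<Sum>k\<le>length w. if k = length w then f w * b else 0)"
    unfolding fmult_def fmono_def by (intro sum.cong) auto
  then show "fmult f (fmono b []) w = f w * b" by simp
qed

lemma fmult_fmono_Nil_left: "fmult (fmono b []) f = (\<lambda>w. (b::'r::ring_1) * f w)"
proof
  fix w
  have "fmult (fmono b []) f w = (\<Sum>k\<le>length w. if k = 0 then b * f w else 0)"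
    unfolding fmult_def fmono_def by (intro sum.cong) auto
  then show "fmult (fmono b []) f w = b * f w" by simp
qed

lemma coeff_mult_scalar_right[simp]: "coeff (X * monom b []) w = coeff X w * b"
  by (simp add: coeff_mult fmult_fmono_Nil_right)
lemma coeff_mult_scalar_left[simp]: "coeff (monom b [] * X) w = b * coeff X w"
  by (simp add: coeff_mult fmult_fmono_Nil_left)

definition central_coeffs :: "('g, 'r::ring_1) nc_series \<Rightarrow> bool" where
  "central_coeffs f \<longleftrightarrow> (\<forall>w r. coeff f w * r = r * coeff f w)"

lemma central_coeffs_commute_scalar: "central_coeffs X \<Longrightarrow> X * monom b [] = monom b [] * X"
  by (rule nc_series_eqI) (simp add: central_coeffs_def)

lemma central_coeffs_add: "central_coeffs a \<Longrightarrow> central_coeffs b \<Longrightarrow> central_coeffs (a + b)"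
  by (simp add: central_coeffs_def distrib_left distrib_right)
lemma central_coeffs_diff: "central_coeffs a \<Longrightarrow> central_coeffs b \<Longrightarrow> central_coeffs (a - b)"
  by (simp add: central_coeffs_def left_diff_distrib right_diff_distrib)
lemma central_coeffs_0: "central_coeffs 0" by (simp add: central_coeffs_def)
lemma central_coeffs_sum: "(\<And>i. i \<in> A \<Longrightarrow> central_coeffs (f i)) \<Longrightarrow> central_coeffs (sum f A)"
  by (induction A rule: infinite_finite_induct) (auto simp: central_coeffs_0 central_coeffs_add)
lemma commute_mult: "y * r = r * y \<Longrightarrow> x * r = r * x \<Longrightarrow> x * (y * r) = r * (x * (y::'r::ring_1))"
proof -
  assume h: "y * r = r * y" "x * r = r * x"
  have "x * (y * r) = (x * r) * y" using h(1) by (simp add: mult.assoc)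
  also have "\<dots> = r * (x * y)" using h(2) by (simp add: mult.assoc)
  finally show ?thesis .
qed

lemma central_coeffs_mult: "central_coeffs a \<Longrightarrow> central_coeffs b \<Longrightarrow> central_coeffs (a * b)"
proof -
  assume a: "central_coeffs a" and b: "central_coeffs b"
  show "central_coeffs (a * b)" unfolding central_coeffs_def coeff_mult fmult_def
  proof (intro allI)
    fix w and r :: 'b
    have "(\<Sum>k\<le>length w. coeff a (take k w) * coeff b (drop k w)) * r
        = (\<Sum>k\<le>length w. coeff a (take k w) * (coeff b (drop k w) * r))"
      by (simp add: sum_distrib_right mult.assoc)
    also have "\<dots> = (\<Sum>k\<le>length w. r * (coeff a (take k w) * coeff b (drop k w)))"
      using a b unfolding central_coeffs_def by (intro sum.cong refl) (rule commute_mult; blast)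
    finally show "(\<Sum>k\<le>length w. coeff a (take k w) * coeff b (drop k w)) * r
        = r * (\<Sum>k\<le>length w. coeff a (take k w) * coeff b (drop k w))"
      by (simp add: sum_distrib_left)
  qed
qed

lemma central_coeffs_monom_1: "central_coeffs (monom 1 u)" by (simp add: central_coeffs_def fmono_def)
lemma central_coeffs_1: "central_coeffs 1" using central_coeffs_monom_1[of "[]"] by (simp add: monom_Nil_1)

lemma scalar_mult_mult:
  assumes "central_coeffs X"
  shows "(monom a [] * X) * (monom b [] * Y) = monom (a * b) [] * (X * Y)"
proof -
  have "(monom a [] * X) * (monom b [] * Y) = monom a [] * (X * monom b []) * Y"
    by (simp add: mult.assoc)
  also have "\<dots> = monom a [] * monom b [] * X * Y" using central_coeffs_commute_scalar[OF assms]
    by (simp add: mult.assoc)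
  finally show ?thesis by (simp add: monom_mult mult.assoc)
qed

lemma series_eq_sum_monoms:
  assumes "finite {w. coeff f w \<noteq> 0}"
  shows "f = (\<Sum>w\<in>{w. coeff f w \<noteq> 0}. monom (coeff f w) w)"
proof (rule nc_series_eqI)
  fix w'
  have "coeff (\<Sum>w\<in>{w. coeff f w \<noteq> 0}. monom (coeff f w) w) w'
      = (\<Sum>w\<in>{w. coeff f w \<noteq> 0}. if w' = w then coeff f w else 0)"
    by (simp add: fmono_def)
  also have "\<dots> = coeff f w'"
    using assms by (simp add: sum.delta')
  finally show "coeff f w' = coeff (\<Sum>w\<in>{w. coeff f w \<noteq> 0}. monom (coeff f w) w) w'" by simp
qed

lemma double_sum_mult_expand:
  fixes L :: "'a \<Rightarrow> ('g, 'r::ring_1) nc_series" and M N :: "'b \<Rightarrow> ('g, 'r) nc_series"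
  assumes "\<And>a. central_coeffs (L a)" "\<And>b. central_coeffs (M b)"
  shows "(\<Sum>a\<in>S1. \<Sum>b\<in>S2. monom (\<alpha> a b) [] * (L a * M b)) * (\<Sum>b'\<in>S2. \<Sum>c\<in>S3. monom (\<beta> b' c) [] * (N b' * K c))
    = (\<Sum>a\<in>S1. \<Sum>b\<in>S2. \<Sum>c\<in>S3. \<Sum>b'\<in>S2. monom (\<alpha> a b * \<beta> b' c) [] * (L a * (M b * N b') * K c))"
proof -
  have "(\<Sum>a\<in>S1. \<Sum>b\<in>S2. monom (\<alpha> a b) [] * (L a * M b)) * (\<Sum>b'\<in>S2. \<Sum>c\<in>S3. monom (\<beta> b' c) [] * (N b' * K c))
      = (\<Sum>a\<in>S1. \<Sum>b\<in>S2. \<Sum>b'\<in>S2. \<Sum>c\<in>S3. (monom (\<alpha> a b) [] * (L a * M b)) * (monom (\<beta> b' c) [] * (N b' * K c)))"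
    by (simp only: sum_distrib_right, simp only: sum_distrib_left)
  also have "\<dots> = (\<Sum>a\<in>S1. \<Sum>b\<in>S2. \<Sum>c\<in>S3. \<Sum>b'\<in>S2. (monom (\<alpha> a b) [] * (L a * M b)) * (monom (\<beta> b' c) [] * (N b' * K c)))"
    by (intro sum.cong refl sum.swap)
  also have "\<dots> = (\<Sum>a\<in>S1. \<Sum>b\<in>S2. \<Sum>c\<in>S3. \<Sum>b'\<in>S2. monom (\<alpha> a b * \<beta> b' c) [] * (L a * (M b * N b') * K c))"
    by (intro sum.cong refl) (subst scalar_mult_mult; simp add: assms central_coeffs_mult mult.assoc)
  finally show ?thesis .
qed

lemma monom_sum: "monom (\<Sum>i\<in>I. c i) u = (\<Sum>i\<in>I. monom (c i) u)"
  by (induction I rule: infinite_finite_induct) (auto simp: monom_add)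

lemma coeff_mult_Nil: "coeff (a * b) [] = coeff a [] * coeff b []"
  by (simp add: coeff_mult fmult_def)

lemma sum_scalar_regroup:
  fixes f :: "'p \<Rightarrow> 'q \<Rightarrow> ('g, 'r::ring_1) nc_series"
  assumes "finite I"
  shows "(\<Sum>i\<in>I. monom (c i) [] * f (row i) (col i)) =
    (\<Sum>p\<in>row ` I. \<Sum>q\<in>col ` I. monom (\<Sum>i\<in>{i\<in>I. row i = p \<and> col i = q}. c i) [] * f p q)"
proof -
  have "(\<Sum>i\<in>I. monom (c i) [] * f (row i) (col i))
      = (\<Sum>pq\<in>row ` I \<times> col ` I. \<Sum>i\<in>{i\<in>I. (row i, col i) = pq}. monom (c i) [] * f (row i) (col i))"
    using assms by (intro sum.group[symmetric]) auto
  also have "\<dots> = (\<Sum>(p, q)\<in>row ` I \<times> col ` I. monom (\<Sum>i\<in>{i\<in>I. row i = p \<and> col i = q}. c i) [] * f p q)"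
    by (intro sum.cong refl) (auto simp: monom_sum sum_distrib_right intro!: sum.cong)
  finally show ?thesis by (simp add: sum.cartesian_product)
qed

section \<open>Paths and the relations of the Leavitt path algebra\<close>

fun epath :: "'v set \<Rightarrow> 'e set \<Rightarrow> ('e \<Rightarrow> 'v) \<Rightarrow> ('e \<Rightarrow> 'v) \<Rightarrow> 'v \<Rightarrow> 'e list \<Rightarrow> bool" where
  "epath V0 E1 rg sc v [] = (v \<in> V0)"
| "epath V0 E1 rg sc v (e # es) = (v \<in> V0 \<and> e \<in> E1 \<and> sc e = v \<and> epath V0 E1 rg sc (rg e) es)"

fun path_end :: "('e \<Rightarrow> 'v) \<Rightarrow> 'v \<Rightarrow> 'e list \<Rightarrow> 'v" where
  "path_end rg v [] = v"
| "path_end rg v (e # es) = path_end rg (rg e) es"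

lemma path_end_append: "path_end rg v (es @ ks) = path_end rg (path_end rg v es) ks"
  by (induction es arbitrary: v) auto

lemma epath_start: "epath V0 E1 rg sc v es \<Longrightarrow> v \<in> V0"
  by (cases es) auto

lemma epath_append: "epath V0 E1 rg sc v (es @ ks) \<longleftrightarrow> epath V0 E1 rg sc v es \<and> epath V0 E1 rg sc (path_end rg v es) ks"
  by (induction es arbitrary: v) (auto dest: epath_start)

type_synonym ('v,'e,'r) gen_series = "(('v,'e) gen, 'r) nc_series"

definition valid_word :: "'v set \<Rightarrow> 'e set \<Rightarrow> ('v,'e) gen list \<Rightarrow> bool" where
  "valid_word V0 E1 w \<longleftrightarrow> (\<forall>x\<in>set w. gen_in V0 E1 x)"

lemma valid_word_append: "valid_word V0 E1 (u @ v) \<longleftrightarrow> valid_word V0 E1 u \<and> valid_word V0 E1 v"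
  by (auto simp: valid_word_def)

locale lpa =
  fixes V0 :: "'v set" and E1 :: "'e set" and rg sc :: "'e \<Rightarrow> 'v" and rty :: "'r::ring_1 itself"
  assumes edges_in_V0: "\<forall>e\<in>E1. sc e \<in> V0 \<and> rg e \<in> V0"
begin

definition rel_ideal :: "('v,'e,'r) gen_series set" where
  "rel_ideal = {f. coeff f \<in> LPA_ideal V0 E1 rg sc}"

definition free_alg :: "('v,'e,'r) gen_series set" where
  "free_alg = {f. finite {w. coeff f w \<noteq> 0} \<and> (\<forall>w. coeff f w \<noteq> 0 \<longrightarrow> valid_word V0 E1 w)}"

definition cong :: "('v,'e,'r) gen_series \<Rightarrow> ('v,'e,'r) gen_series \<Rightarrow> bool" (infix "\<approx>" 50) where
  "a \<approx> b \<longleftrightarrow> a \<in> free_alg \<and> b \<in> free_alg \<and> a - b \<in> rel_ideal"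

abbreviation "path \<equiv> epath V0 E1 rg sc"

lemma rel_ideal_gen: "g \<in> LPA_rels V0 E1 rg sc \<Longrightarrow> valid_word V0 E1 u \<Longrightarrow> valid_word V0 E1 u'
   \<Longrightarrow> monom c u * Series g * monom c' u' \<in> rel_ideal"
  unfolding rel_ideal_def valid_word_def by (simp add: coeff_mult LPA_ideal.gen)

lemma rel_ideal_0: "0 \<in> rel_ideal" unfolding rel_ideal_def zero_nc_series_def by (simp add: LPA_ideal.zero)

lemma rel_ideal_add: "a \<in> rel_ideal \<Longrightarrow> b \<in> rel_ideal \<Longrightarrow> a + b \<in> rel_ideal"
  unfolding rel_ideal_def using LPA_ideal.add[of "coeff a" V0 E1 rg sc "coeff b"]
  by (simp add: fadd_def plus_nc_series_def)

lemma rel_ideal_induct[consumes 1, case_names zero gen add]: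
  assumes "h \<in> rel_ideal"
    and "P 0"
    and "\<And>g u u' c c'. g \<in> LPA_rels V0 E1 rg sc \<Longrightarrow> valid_word V0 E1 u \<Longrightarrow> valid_word V0 E1 u'
          \<Longrightarrow> P (monom c u * Series g * monom c' u')"
    and "\<And>a b. a \<in> rel_ideal \<Longrightarrow> b \<in> rel_ideal \<Longrightarrow> P a \<Longrightarrow> P b \<Longrightarrow> P (a + b)"
  shows "P h"
proof -
  have "coeff h \<in> LPA_ideal V0 E1 rg sc" using assms(1) by (simp add: rel_ideal_def)
  then have "P (Series (coeff h))"
  proof (induction "coeff h" arbitrary: h rule: LPA_ideal.induct)
    case zero then show ?case using assms(2) by (simp add: zero_nc_series_def)
  next
    case (gen g u u' c c')
    have "Series (fmult (fmult (fmono c u) g) (fmono c' u')) = monom c u * Series g * monom c' u'"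
      by (simp add: times_nc_series_def)
    then show ?case using assms(3)[of g u u' c c'] gen by (simp add: valid_word_def)
  next
    case (add f g)
    have "Series (fadd f g) = Series f + Series g" by (simp add: plus_nc_series_def fadd_def)
    then show ?case using add assms(4)[of "Series f" "Series g"] by (simp add: rel_ideal_def)
  qed
  then show ?thesis by simp
qed

lemma rel_ideal_neg: "a \<in> rel_ideal \<Longrightarrow> - a \<in> rel_ideal"
proof (induction rule: rel_ideal_induct)
  case zero then show ?case by (simp add: rel_ideal_0)
next
  case (gen g u u' c c')
  have "- (monom c u * Series g * monom c' u') = monom (-c) u * Series g * monom c' u'"
    by (simp add: monom_neg)
  then show ?case using gen rel_ideal_gen by simp
next
  case (add a b)
  have "- (a + b) = - a + - b" by simp
  then show ?case using add rel_ideal_add by metis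
qed

lemma rel_ideal_sum: "(\<And>i. i \<in> A \<Longrightarrow> f i \<in> rel_ideal) \<Longrightarrow> sum f A \<in> rel_ideal"
  by (induction A rule: infinite_finite_induct) (auto simp: rel_ideal_0 rel_ideal_add)

lemma rel_ideal_monom_left: "a \<in> rel_ideal \<Longrightarrow> valid_word V0 E1 v \<Longrightarrow> monom d v * a \<in> rel_ideal"
proof (induction rule: rel_ideal_induct)
  case zero then show ?case by (simp add: rel_ideal_0)
next
  case (gen g u u' c c')
  have "monom d v * (monom c u * Series g * monom c' u') = monom (d * c) (v @ u) * Series g * monom c' u'"
    by (simp add: monom_mult mult.assoc[symmetric])
  moreover have "valid_word V0 E1 (v @ u)" using gen by (auto simp: valid_word_def)
  ultimately show ?case using gen rel_ideal_gen by simp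
next
  case (add a b) then show ?case using rel_ideal_add by (simp add: distrib_left)
qed

lemma rel_ideal_monom_right: "a \<in> rel_ideal \<Longrightarrow> valid_word V0 E1 v \<Longrightarrow> a * monom d v \<in> rel_ideal"
proof (induction rule: rel_ideal_induct)
  case zero then show ?case by (simp add: rel_ideal_0)
next
  case (gen g u u' c c')
  have "(monom c u * Series g * monom c' u') * monom d v = monom c u * Series g * monom (c' * d) (u' @ v)"
    by (simp add: monom_mult mult.assoc)
  moreover have "valid_word V0 E1 (u' @ v)" using gen by (auto simp: valid_word_def)
  ultimately show ?case using gen rel_ideal_gen by simp
next
  case (add a b) then show ?case using rel_ideal_add by (simp add: distrib_right)
qed

lemma rel_ideal_mult_left: "a \<in> rel_ideal \<Longrightarrow> f \<in> free_alg \<Longrightarrow> f * a \<in> rel_ideal"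
proof -
  assume a: "a \<in> rel_ideal" and f: "f \<in> free_alg"
  have "f = (\<Sum>w\<in>{w. coeff f w \<noteq> 0}. monom (coeff f w) w)"
    using f by (intro series_eq_sum_monoms) (simp add: free_alg_def)
  then have "f * a = (\<Sum>w\<in>{w. coeff f w \<noteq> 0}. monom (coeff f w) w) * a"
    by (rule arg_cong[where f="\<lambda>x. x * a"])
  also have "\<dots> = (\<Sum>w\<in>{w. coeff f w \<noteq> 0}. monom (coeff f w) w * a)"
    by (rule sum_distrib_right)
  also have "\<dots> \<in> rel_ideal" using f a by (intro rel_ideal_sum rel_ideal_monom_left) (auto simp: free_alg_def)
  finally show ?thesis .
qed

lemma rel_ideal_mult_right: "a \<in> rel_ideal \<Longrightarrow> f \<in> free_alg \<Longrightarrow> a * f \<in> rel_ideal"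
proof -
  assume a: "a \<in> rel_ideal" and f: "f \<in> free_alg"
  have "f = (\<Sum>w\<in>{w. coeff f w \<noteq> 0}. monom (coeff f w) w)"
    using f by (intro series_eq_sum_monoms) (simp add: free_alg_def)
  then have "a * f = a * (\<Sum>w\<in>{w. coeff f w \<noteq> 0}. monom (coeff f w) w)"
    by (rule arg_cong[where f="\<lambda>x. a * x"])
  also have "\<dots> = (\<Sum>w\<in>{w. coeff f w \<noteq> 0}. a * monom (coeff f w) w)"
    by (rule sum_distrib_left)
  also have "\<dots> \<in> rel_ideal" using f a by (intro rel_ideal_sum rel_ideal_monom_right) (auto simp: free_alg_def)
  finally show ?thesis .
qed

lemma free_alg_valid_word: "f \<in> free_alg \<Longrightarrow> coeff f w \<noteq> 0 \<Longrightarrow> valid_word V0 E1 w"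
  by (simp add: free_alg_def)

lemma free_alg_0: "0 \<in> free_alg" by (simp add: free_alg_def)
lemma free_alg_add: "a \<in> free_alg \<Longrightarrow> b \<in> free_alg \<Longrightarrow> a + b \<in> free_alg"
proof -
  assume a: "a \<in> free_alg" and b: "b \<in> free_alg"
  have sub: "{w. coeff (a + b) w \<noteq> 0} \<subseteq> {w. coeff a w \<noteq> 0} \<union> {w. coeff b w \<noteq> 0}" by auto
  have "finite {w. coeff (a + b) w \<noteq> 0}" using a b unfolding free_alg_def by (intro finite_subset[OF sub]) auto
  moreover have "\<forall>w. coeff (a + b) w \<noteq> 0 \<longrightarrow> valid_word V0 E1 w"
  proof (intro allI impI)
    fix w assume "coeff (a + b) w \<noteq> 0"
    then have "coeff a w \<noteq> 0 \<or> coeff b w \<noteq> 0" by auto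
    then show "valid_word V0 E1 w" using free_alg_valid_word[OF a] free_alg_valid_word[OF b] by blast
  qed
  ultimately show ?thesis by (simp add: free_alg_def)
qed

lemma free_alg_neg: "a \<in> free_alg \<Longrightarrow> - a \<in> free_alg" by (simp add: free_alg_def)
lemma free_alg_diff: "a \<in> free_alg \<Longrightarrow> b \<in> free_alg \<Longrightarrow> a - b \<in> free_alg"
  using free_alg_add[of a "- b"] free_alg_neg[of b] by (simp add: diff_conv_add_uminus del: add_uminus_conv_diff)
lemma free_alg_sum: "(\<And>i. i \<in> A \<Longrightarrow> f i \<in> free_alg) \<Longrightarrow> sum f A \<in> free_alg"
  by (induction A rule: infinite_finite_induct) (auto simp: free_alg_0 free_alg_add)
lemma free_alg_monom: "valid_word V0 E1 u \<Longrightarrow> monom c u \<in> free_alg"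
proof -
  assume v: "valid_word V0 E1 u"
  have sub: "{w. coeff (monom c u) w \<noteq> 0} \<subseteq> {u}" by (auto simp: fmono_def)
  have "finite {w. coeff (monom c u) w \<noteq> 0}" by (rule finite_subset[OF sub]) simp
  moreover have "\<forall>w. coeff (monom c u) w \<noteq> 0 \<longrightarrow> valid_word V0 E1 w" using v by (simp add: fmono_def)
  ultimately show ?thesis by (simp add: free_alg_def)
qed

lemma coeff_mult_nonzero:
  assumes "coeff (a * b) w \<noteq> 0"
  shows "\<exists>k. coeff a (take k w) \<noteq> 0 \<and> coeff b (drop k w) \<noteq> 0"
proof (rule ccontr)
  assume "\<not> ?thesis"
  then have "coeff (a * b) w = (\<Sum>k\<le>length w. 0)"
    unfolding coeff_mult fmult_def by (intro sum.cong refl) (metis mult_zero_left mult_zero_right)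
  then show False using assms by simp
qed

lemma free_alg_mult: "a \<in> free_alg \<Longrightarrow> b \<in> free_alg \<Longrightarrow> a * b \<in> free_alg"
proof -
  assume a: "a \<in> free_alg" and b: "b \<in> free_alg"
  have sub: "{w. coeff (a * b) w \<noteq> 0} \<subseteq> (\<lambda>(x,y). x @ y) ` ({w. coeff a w \<noteq> 0} \<times> {w. coeff b w \<noteq> 0})"
  proof
    fix w assume "w \<in> {w. coeff (a * b) w \<noteq> 0}"
    then have "coeff (a * b) w \<noteq> 0" by simp
    then obtain k where "coeff a (take k w) \<noteq> 0" "coeff b (drop k w) \<noteq> 0"
      using coeff_mult_nonzero[of a b w] by blast
    then show "w \<in> (\<lambda>(x,y). x @ y) ` ({w. coeff a w \<noteq> 0} \<times> {w. coeff b w \<noteq> 0})"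
      by (intro image_eqI[of _ _ "(take k w, drop k w)"]) auto
  qed
  have fin: "finite {w. coeff (a * b) w \<noteq> 0}"
    using a b unfolding free_alg_def by (intro finite_subset[OF sub] finite_imageI finite_cartesian_product) auto
  have "valid_word V0 E1 w" if nz: "coeff (a * b) w \<noteq> 0" for w
  proof -
    obtain k where k: "coeff a (take k w) \<noteq> 0" "coeff b (drop k w) \<noteq> 0"
      using coeff_mult_nonzero[OF nz] by auto
    have "valid_word V0 E1 (take k w)" using free_alg_valid_word[OF a k(1)] .
    moreover have "valid_word V0 E1 (drop k w)" using free_alg_valid_word[OF b k(2)] .
    ultimately have "valid_word V0 E1 (take k w @ drop k w)" by (simp only: valid_word_append)
    then show ?thesis by simp
  qed
  then have "\<forall>w. coeff (a * b) w \<noteq> 0 \<longrightarrow> valid_word V0 E1 w" by blast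
  then show ?thesis using fin unfolding free_alg_def by (intro CollectI conjI)
qed

lemma free_alg_1: "1 \<in> free_alg" using free_alg_monom[of "[]" 1] by (simp add: monom_Nil_1 valid_word_def)

lemma cong_refl: "a \<in> free_alg \<Longrightarrow> a \<approx> a" by (simp add: cong_def rel_ideal_0)
lemma cong_free_alg: "a \<approx> b \<Longrightarrow> a \<in> free_alg" "a \<approx> b \<Longrightarrow> b \<in> free_alg" by (simp_all add: cong_def)
lemma cong_sym: "a \<approx> b \<Longrightarrow> b \<approx> a"
proof -
  assume h: "a \<approx> b"
  have "b - a = - (a - b)" by simp
  then show ?thesis using h rel_ideal_neg unfolding cong_def by metis
qed

lemma cong_trans: "a \<approx> b \<Longrightarrow> b \<approx> c \<Longrightarrow> a \<approx> c"
proof -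
  assume h: "a \<approx> b" "b \<approx> c"
  have "a - c = (a - b) + (b - c)" by simp
  then show ?thesis using h rel_ideal_add unfolding cong_def by metis
qed

lemma cong_add: "a \<approx> b \<Longrightarrow> c \<approx> d \<Longrightarrow> a + c \<approx> b + d"
proof -
  assume "a \<approx> b" "c \<approx> d"
  moreover have "a + c - (b + d) = (a - b) + (c - d)" by simp
  ultimately show ?thesis unfolding cong_def using rel_ideal_add free_alg_add by metis
qed

lemma cong_neg: "a \<approx> b \<Longrightarrow> - a \<approx> - b"
proof -
  assume h: "a \<approx> b"
  have "- a - - b = - (a - b)" by simp
  then show ?thesis using h rel_ideal_neg free_alg_neg unfolding cong_def by metis
qed

lemma cong_diff: "a \<approx> b \<Longrightarrow> c \<approx> d \<Longrightarrow> a - c \<approx> b - d"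
  using cong_add[of a b "- c" "- d"] cong_neg[of c d] by (simp add: diff_conv_add_uminus del: add_uminus_conv_diff)
lemma cong_mult: "a \<approx> b \<Longrightarrow> c \<approx> d \<Longrightarrow> a * c \<approx> b * d"
proof -
  assume ab: "a \<approx> b" and cd: "c \<approx> d"
  have "a * c - b * d = a * (c - d) + (a - b) * d" by (simp add: algebra_simps)
  moreover have "a * (c - d) \<in> rel_ideal" using ab cd rel_ideal_mult_left[of "c - d" a] by (simp add: cong_def)
  moreover have "(a - b) * d \<in> rel_ideal" using ab cd rel_ideal_mult_right[of "a - b" d] by (simp add: cong_def)
  ultimately have "a * c - b * d \<in> rel_ideal" using rel_ideal_add by simp
  then show ?thesis using ab cd free_alg_mult unfolding cong_def by blast
qed

lemma cong_sum: "(\<And>i. i \<in> A \<Longrightarrow> f i \<approx> g i) \<Longrightarrow> sum f A \<approx> sum g A"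
  by (induction A rule: infinite_finite_induct) (auto simp: cong_refl free_alg_0 cong_add)
lemma cong_eq_trans: "a \<approx> b \<Longrightarrow> b = c \<Longrightarrow> a \<approx> c" by simp
lemma eq_cong_trans: "a = b \<Longrightarrow> b \<approx> c \<Longrightarrow> a \<approx> c" by simp

lemma rel_in_ideal: "g \<in> LPA_rels V0 E1 rg sc \<Longrightarrow> Series g \<in> rel_ideal"
  using rel_ideal_gen[of g "[]" "[]" 1 1] by (simp add: monom_Nil_1 valid_word_def)

lemmas cong_trans_rules[trans] = cong_trans cong_eq_trans eq_cong_trans

lemma regular_cong:
  assumes "X \<approx> X'" "y \<in> free_alg" "X' * y * X' \<approx> X'"
  shows "X * y * X \<approx> X"
proof -
  have "X * y * X \<approx> X' * y * X'" using assms(1,2) by (intro cong_mult cong_refl)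
  also have "\<dots> \<approx> X'" by (rule assms(3))
  also have "X' \<approx> X" using assms(1) by (rule cong_sym)
  finally show ?thesis .
qed

definition vtx :: "'v \<Rightarrow> ('v,'e,'r) gen_series" where "vtx v = monom 1 [Vx v]"
definition edge :: "'e \<Rightarrow> ('v,'e,'r) gen_series" where "edge e = monom 1 [Ed e]"
definition ghost :: "'e \<Rightarrow> ('v,'e,'r) gen_series" where "ghost e = monom 1 [Gh e]"
definition edge_path :: "'e list \<Rightarrow> ('v,'e,'r) gen_series" where "edge_path es = monom 1 (map Ed es)"
definition ghost_path :: "'e list \<Rightarrow> ('v,'e,'r) gen_series" where "ghost_path es = monom 1 (rev (map Gh es))"
definition mu :: "'v \<Rightarrow> 'e list \<Rightarrow> ('v,'e,'r) gen_series" where "mu v es = vtx v * edge_path es"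
definition mu_star :: "'v \<Rightarrow> 'e list \<Rightarrow> ('v,'e,'r) gen_series" where "mu_star v es = ghost_path es * vtx v"

lemma edge_path_Nil[simp]: "edge_path [] = 1" by (simp add: edge_path_def monom_Nil_1)
lemma ghost_path_Nil[simp]: "ghost_path [] = 1" by (simp add: ghost_path_def monom_Nil_1)
lemma edge_path_Cons: "edge_path (e # es) = edge e * edge_path es" by (simp add: edge_path_def edge_def monom_mult)
lemma ghost_path_Cons: "ghost_path (e # es) = ghost_path es * ghost e" by (simp add: ghost_path_def ghost_def monom_mult)

lemma central_coeffs_vtx: "central_coeffs (vtx v)" by (simp add: vtx_def central_coeffs_monom_1)
lemma central_coeffs_edge: "central_coeffs (edge v)" by (simp add: edge_def central_coeffs_monom_1)
lemma central_coeffs_ghost: "central_coeffs (ghost v)" by (simp add: ghost_def central_coeffs_monom_1)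
lemma central_coeffs_edge_path: "central_coeffs (edge_path v)" by (simp add: edge_path_def central_coeffs_monom_1)
lemma central_coeffs_ghost_path: "central_coeffs (ghost_path v)" by (simp add: ghost_path_def central_coeffs_monom_1)
lemma central_coeffs_mu: "central_coeffs (mu v es)" by (simp add: mu_def central_coeffs_mult central_coeffs_vtx central_coeffs_edge_path)
lemma central_coeffs_mu_star: "central_coeffs (mu_star v es)" by (simp add: mu_star_def central_coeffs_mult central_coeffs_vtx central_coeffs_ghost_path)

lemma free_alg_vtx: "v \<in> V0 \<Longrightarrow> vtx v \<in> free_alg" by (simp add: vtx_def free_alg_monom valid_word_def gen_in_def)
lemma free_alg_edge: "e \<in> E1 \<Longrightarrow> edge e \<in> free_alg" by (simp add: edge_def free_alg_monom valid_word_def gen_in_def)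
lemma free_alg_ghost: "e \<in> E1 \<Longrightarrow> ghost e \<in> free_alg" by (simp add: ghost_def free_alg_monom valid_word_def gen_in_def)
lemma free_alg_edge_path: "set es \<subseteq> E1 \<Longrightarrow> edge_path es \<in> free_alg" by (unfold edge_path_def, intro free_alg_monom) (auto simp: valid_word_def gen_in_def)
lemma free_alg_ghost_path: "set es \<subseteq> E1 \<Longrightarrow> ghost_path es \<in> free_alg" by (unfold ghost_path_def, intro free_alg_monom) (auto simp: valid_word_def gen_in_def)

lemma epath_edges: "path v es \<Longrightarrow> set es \<subseteq> E1"
  by (induction es arbitrary: v) auto
lemma epath_end: "path v es \<Longrightarrow> path_end rg v es \<in> V0"
  by (induction es arbitrary: v) auto

lemma free_alg_mu: "path v es \<Longrightarrow> mu v es \<in> free_alg"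
  by (simp add: mu_def free_alg_mult free_alg_vtx free_alg_edge_path epath_edges epath_start)
lemma free_alg_mu_star: "path v es \<Longrightarrow> mu_star v es \<in> free_alg"
  by (simp add: mu_star_def free_alg_mult free_alg_vtx free_alg_ghost_path epath_edges epath_start)

lemma Series_fdiff: "Series (fdiff f g) = Series f - Series g" by (simp add: fdiff_def minus_nc_series_def)
lemma Series_fmono: "Series (fmono c u) = monom c u" by (simp add: monom_def)
lemma Series_zero: "Series (\<lambda>_. 0) = 0" by (simp add: zero_nc_series_def)

lemma rel_cong: "fdiff f g \<in> LPA_rels V0 E1 rg sc \<Longrightarrow> Series f \<in> free_alg \<Longrightarrow> Series g \<in> free_alg \<Longrightarrow> Series f \<approx> Series g"
  using rel_in_ideal[of "fdiff f g"] by (simp add: cong_def Series_fdiff)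

lemma vtx_mult_vtx: "v \<in> V0 \<Longrightarrow> v' \<in> V0 \<Longrightarrow> (vtx v :: ('v,'e,'r) gen_series) * vtx v' \<approx> (if v = v' then vtx v else 0)"
proof -
  assume v: "v \<in> V0" "v' \<in> V0"
  let ?f = "fmono (1::'r) [Vx v, Vx v']"
  let ?g = "if v = v' then fmono (1::'r) [Vx v] else (\<lambda>_. 0)"
  have "fdiff ?f ?g \<in> LPA_rels V0 E1 rg sc" unfolding LPA_rels_def using v by blast
  moreover have "Series ?f = vtx v * vtx v'" by (simp add: vtx_def monom_mult Series_fmono)
  moreover have "Series ?g = (if v = v' then vtx v else 0)" by (simp add: vtx_def Series_fmono Series_zero)
  moreover have "vtx v * vtx v' \<in> free_alg" using v by (simp add: free_alg_mult free_alg_vtx)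
  moreover have "(if v = v' then vtx v else 0) \<in> free_alg" using v by (simp add: free_alg_vtx free_alg_0)
  ultimately show ?thesis using rel_cong[of ?f ?g] by (simp only:)
qed

lemma src_vtx_edge: "e \<in> E1 \<Longrightarrow> (vtx (sc e) :: ('v,'e,'r) gen_series) * edge e \<approx> edge e"
proof -
  assume e: "e \<in> E1"
  let ?f = "fmono (1::'r) [Vx (sc e), Ed e]" and ?g = "fmono (1::'r) [Ed e]"
  have "fdiff ?f ?g \<in> LPA_rels V0 E1 rg sc" unfolding LPA_rels_def using e by blast
  moreover have "Series ?f = vtx (sc e) * edge e" by (simp add: vtx_def edge_def monom_mult Series_fmono)
  moreover have "Series ?g = edge e" by (simp add: edge_def Series_fmono)
  moreover have "vtx (sc e) * edge e \<in> free_alg" using e edges_in_V0 by (simp add: free_alg_mult free_alg_vtx free_alg_edge)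
  moreover have "edge e \<in> free_alg" using e by (simp add: free_alg_edge)
  ultimately show ?thesis using rel_cong[of ?f ?g] by (simp only:)
qed

lemma edge_rng_vtx: "e \<in> E1 \<Longrightarrow> (edge e :: ('v,'e,'r) gen_series) * vtx (rg e) \<approx> edge e"
proof -
  assume e: "e \<in> E1"
  let ?f = "fmono (1::'r) [Ed e, Vx (rg e)]" and ?g = "fmono (1::'r) [Ed e]"
  have "fdiff ?f ?g \<in> LPA_rels V0 E1 rg sc" unfolding LPA_rels_def using e by blast
  moreover have "Series ?f = edge e * vtx (rg e)" by (simp add: vtx_def edge_def monom_mult Series_fmono)
  moreover have "Series ?g = edge e" by (simp add: edge_def Series_fmono)
  moreover have "edge e * vtx (rg e) \<in> free_alg" using e edges_in_V0 by (simp add: free_alg_mult free_alg_vtx free_alg_edge)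
  moreover have "edge e \<in> free_alg" using e by (simp add: free_alg_edge)
  ultimately show ?thesis using rel_cong[of ?f ?g] by (simp only:)
qed

lemma rng_vtx_ghost: "e \<in> E1 \<Longrightarrow> (vtx (rg e) :: ('v,'e,'r) gen_series) * ghost e \<approx> ghost e"
proof -
  assume e: "e \<in> E1"
  let ?f = "fmono (1::'r) [Vx (rg e), Gh e]" and ?g = "fmono (1::'r) [Gh e]"
  have "fdiff ?f ?g \<in> LPA_rels V0 E1 rg sc" unfolding LPA_rels_def using e by blast
  moreover have "Series ?f = vtx (rg e) * ghost e" by (simp add: vtx_def ghost_def monom_mult Series_fmono)
  moreover have "Series ?g = ghost e" by (simp add: ghost_def Series_fmono)
  moreover have "vtx (rg e) * ghost e \<in> free_alg" using e edges_in_V0 by (simp add: free_alg_mult free_alg_vtx free_alg_ghost)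
  moreover have "ghost e \<in> free_alg" using e by (simp add: free_alg_ghost)
  ultimately show ?thesis using rel_cong[of ?f ?g] by (simp only:)
qed

lemma ghost_src_vtx: "e \<in> E1 \<Longrightarrow> (ghost e :: ('v,'e,'r) gen_series) * vtx (sc e) \<approx> ghost e"
proof -
  assume e: "e \<in> E1"
  let ?f = "fmono (1::'r) [Gh e, Vx (sc e)]" and ?g = "fmono (1::'r) [Gh e]"
  have "fdiff ?f ?g \<in> LPA_rels V0 E1 rg sc" unfolding LPA_rels_def using e by blast
  moreover have "Series ?f = ghost e * vtx (sc e)" by (simp add: vtx_def ghost_def monom_mult Series_fmono)
  moreover have "Series ?g = ghost e" by (simp add: ghost_def Series_fmono)
  moreover have "ghost e * vtx (sc e) \<in> free_alg" using e edges_in_V0 by (simp add: free_alg_mult free_alg_vtx free_alg_ghost)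
  moreover have "ghost e \<in> free_alg" using e by (simp add: free_alg_ghost)
  ultimately show ?thesis using rel_cong[of ?f ?g] by (simp only:)
qed

lemma ghost_mult_edge: "e \<in> E1 \<Longrightarrow> e' \<in> E1 \<Longrightarrow> (ghost e :: ('v,'e,'r) gen_series) * edge e' \<approx> (if e = e' then vtx (rg e) else 0)"
proof -
  assume e: "e \<in> E1" "e' \<in> E1"
  let ?f = "fmono (1::'r) [Gh e, Ed e']"
  let ?g = "if e = e' then fmono (1::'r) [Vx (rg e)] else (\<lambda>_. 0)"
  have "fdiff ?f ?g \<in> LPA_rels V0 E1 rg sc" unfolding LPA_rels_def using e by blast
  moreover have "Series ?f = ghost e * edge e'" by (simp add: ghost_def edge_def monom_mult Series_fmono)
  moreover have "Series ?g = (if e = e' then vtx (rg e) else 0)" by (simp add: vtx_def Series_fmono Series_zero)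
  moreover have "ghost e * edge e' \<in> free_alg" using e by (simp add: free_alg_mult free_alg_ghost free_alg_edge)
  moreover have "(if e = e' then vtx (rg e) else 0) \<in> free_alg" using e edges_in_V0 by (simp add: free_alg_vtx free_alg_0)
  ultimately show ?thesis using rel_cong[of ?f ?g] by (simp only:)
qed

lemma cong_mult_left: "c \<in> free_alg \<Longrightarrow> a \<approx> b \<Longrightarrow> c * a \<approx> c * b"
  using cong_mult cong_refl by blast
lemma cong_mult_right: "c \<in> free_alg \<Longrightarrow> a \<approx> b \<Longrightarrow> a * c \<approx> b * c"
  using cong_mult cong_refl by blast

lemma cong_ctx: "A \<in> free_alg \<Longrightarrow> B \<in> free_alg \<Longrightarrow> X \<approx> Y \<Longrightarrow> A * X * B \<approx> A * Y * B"
  using cong_mult_left cong_mult_right free_alg_mult cong_free_alg by metis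

lemma cong_zero_left: "X \<approx> 0 \<Longrightarrow> B \<in> free_alg \<Longrightarrow> X * B \<approx> 0"
  using cong_mult_right[of B X 0] by simp
lemma cong_zero_right: "X \<approx> 0 \<Longrightarrow> B \<in> free_alg \<Longrightarrow> B * X \<approx> 0"
  using cong_mult_left[of B X 0] by simp

lemma mu_Nil: "mu v [] = vtx v" by (simp add: mu_def)
lemma mu_star_Nil: "mu_star v [] = vtx v" by (simp add: mu_star_def)

lemma vtx_idem: "v \<in> V0 \<Longrightarrow> vtx v * vtx v \<approx> vtx v"
  using vtx_mult_vtx[of v v] by simp

lemma mu_Cons:
  assumes "path v (e # es)"
  shows "mu v (e # es) \<approx> vtx v * edge e * mu (rg e) es"
proof -
  have e: "e \<in> E1" "sc e = v" "path (rg e) es" using assms by auto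
  have vals: "vtx v \<in> free_alg" "edge_path es \<in> free_alg" "edge e \<in> free_alg"
    using assms e by (auto simp: free_alg_vtx free_alg_edge_path free_alg_edge epath_edges)
  have "mu v (e # es) = vtx v * edge e * edge_path es" by (simp add: mu_def edge_path_Cons mult.assoc)
  also have "\<dots> \<approx> vtx v * (edge e * vtx (rg e)) * edge_path es"
    using vals e cong_sym[OF edge_rng_vtx[OF e(1)]] by (intro cong_ctx) auto
  also have "\<dots> = vtx v * edge e * mu (rg e) es" by (simp add: mu_def mult.assoc)
  finally show ?thesis .
qed

lemma mu_star_Cons:
  assumes "path v (e # es)"
  shows "mu_star v (e # es) \<approx> mu_star (rg e) es * ghost e * vtx v"
proof -
  have e: "e \<in> E1" "sc e = v" "path (rg e) es" using assms by auto
  have vals: "vtx v \<in> free_alg" "ghost_path es \<in> free_alg" "ghost e \<in> free_alg"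
    using assms e by (auto simp: free_alg_vtx free_alg_ghost_path free_alg_ghost epath_edges)
  have "mu_star v (e # es) = ghost_path es * ghost e * vtx v" by (simp add: mu_star_def ghost_path_Cons mult.assoc)
  also have "\<dots> \<approx> ghost_path es * (vtx (rg e) * ghost e) * vtx v"
    using vals e cong_sym[OF rng_vtx_ghost[OF e(1)]] by (intro cong_ctx) auto
  also have "\<dots> = mu_star (rg e) es * ghost e * vtx v" by (simp add: mu_star_def mult.assoc)
  finally show ?thesis .
qed

lemma vtx_mu: "path v es \<Longrightarrow> vtx v * mu v es \<approx> mu v es"
proof -
  assume p: "path v es"
  have v: "v \<in> V0" using epath_start[OF p] .
  have "vtx v * mu v es = 1 * (vtx v * vtx v) * edge_path es" by (simp add: mu_def mult.assoc)
  also have "\<dots> \<approx> 1 * vtx v * edge_path es" using v p by (intro cong_ctx vtx_idem) (auto simp: free_alg_1 free_alg_edge_path epath_edges)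
  also have "\<dots> = mu v es" by (simp add: mu_def)
  finally show ?thesis .
qed

lemma mu_vtx_end: "path v es \<Longrightarrow> mu v es * vtx (path_end rg v es) \<approx> mu v es"
proof (induction es arbitrary: v)
  case Nil
  then show ?case using vtx_idem[of v] by (simp add: mu_def)
next
  case (Cons e es)
  have e: "e \<in> E1" "sc e = v" "path (rg e) es" "v \<in> V0" using Cons.prems by auto
  have vals: "vtx v \<in> free_alg" "edge e \<in> free_alg" "vtx (path_end rg (rg e) es) \<in> free_alg"
    using e Cons.prems by (auto simp: free_alg_vtx free_alg_edge epath_end)
  have "mu v (e # es) * vtx (path_end rg v (e # es)) \<approx> vtx v * edge e * mu (rg e) es * vtx (path_end rg (rg e) es)"
    using cong_mult_right[OF vals(3) mu_Cons[OF Cons.prems]] by simp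
  also have "\<dots> = vtx v * edge e * (mu (rg e) es * vtx (path_end rg (rg e) es)) * 1" by (simp add: mult.assoc)
  also have "\<dots> \<approx> vtx v * edge e * mu (rg e) es * 1"
    using Cons.IH[OF e(3)] vals by (intro cong_ctx) (auto simp: free_alg_1 free_alg_mult)
  also have "\<dots> \<approx> mu v (e # es)" using mu_Cons[OF Cons.prems] by (simp add: cong_sym)
  finally show ?case .
qed

lemma vtx_end_mu_star: "path v es \<Longrightarrow> vtx (path_end rg v es) * mu_star v es \<approx> mu_star v es"
proof (induction es arbitrary: v)
  case Nil
  then show ?case using vtx_idem[of v] by (simp add: mu_star_def)
next
  case (Cons e es)
  have e: "e \<in> E1" "sc e = v" "path (rg e) es" "v \<in> V0" using Cons.prems by auto
  have vals: "vtx v \<in> free_alg" "ghost e \<in> free_alg" "vtx (path_end rg (rg e) es) \<in> free_alg"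
    using e Cons.prems by (auto simp: free_alg_vtx free_alg_ghost epath_end)
  have "vtx (path_end rg v (e # es)) * mu_star v (e # es) \<approx> vtx (path_end rg (rg e) es) * (mu_star (rg e) es * ghost e * vtx v)"
    using cong_mult_left[OF vals(3) mu_star_Cons[OF Cons.prems]] by simp
  also have "\<dots> = 1 * (vtx (path_end rg (rg e) es) * mu_star (rg e) es) * (ghost e * vtx v)" by (simp add: mult.assoc)
  also have "\<dots> \<approx> 1 * mu_star (rg e) es * (ghost e * vtx v)"
    using Cons.IH[OF e(3)] vals by (intro cong_ctx) (auto simp: free_alg_1 free_alg_mult)
  also have "\<dots> \<approx> mu_star v (e # es)" using mu_star_Cons[OF Cons.prems] by (simp add: cong_sym mult.assoc)
  finally show ?case .
qed

lemma mu_star_Nil_mult_mu: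
  assumes "v \<in> V0" "path v' es'"
  shows "mu_star v [] * mu v' es' \<approx> (if v = v' then mu v es' else 0)"
proof -
  have v': "v' \<in> V0" using epath_start assms by metis
  have "mu_star v [] * mu v' es' = 1 * (vtx v * vtx v') * edge_path es'" by (simp add: mu_star_def mu_def mult.assoc)
  also have "\<dots> \<approx> 1 * (if v = v' then vtx v else 0) * edge_path es'"
    using assms v' by (intro cong_ctx vtx_mult_vtx) (auto simp: free_alg_1 free_alg_edge_path epath_edges)
  also have "\<dots> = (if v = v' then mu v es' else 0)" by (simp add: mu_def)
  finally show ?thesis .
qed

lemma mu_star_mult_mu_Nil:
  assumes "path v es" "v' \<in> V0"
  shows "mu_star v es * mu v' [] \<approx> (if v = v' then mu_star v es else 0)"
proof -
  have v: "v \<in> V0" using epath_start assms by metis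
  have "mu_star v es * mu v' [] = ghost_path es * (vtx v * vtx v') * 1" by (simp add: mu_star_def mu_def mult.assoc)
  also have "\<dots> \<approx> ghost_path es * (if v = v' then vtx v else 0) * 1"
    using assms v by (intro cong_ctx vtx_mult_vtx) (auto simp: free_alg_1 free_alg_ghost_path epath_edges)
  also have "\<dots> = (if v = v' then mu_star v es else 0)" by (simp add: mu_star_def)
  finally show ?thesis .
qed

lemma mu_star_mult_mu_Cons:
  assumes "path v (e # es)" "path v' (e' # es')"
  shows "mu_star v (e # es) * mu v' (e' # es') \<approx> (if e = e' then mu_star (rg e) es * mu (rg e) es' else 0)"
proof -
  have e: "e \<in> E1" "sc e = v" "path (rg e) es" "v \<in> V0" using assms(1) by auto
  have e': "e' \<in> E1" "sc e' = v'" "path (rg e') es'" "v' \<in> V0" using assms(2) by auto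
  have vals: "mu_star (rg e) es \<in> free_alg" "mu (rg e') es' \<in> free_alg" "ghost e \<in> free_alg" "edge e' \<in> free_alg" "vtx v \<in> free_alg" "vtx v' \<in> free_alg"
    using e e' by (auto simp: free_alg_mu_star free_alg_mu free_alg_ghost free_alg_edge free_alg_vtx)
  have "mu_star v (e # es) * mu v' (e' # es') \<approx> (mu_star (rg e) es * ghost e * vtx v) * (vtx v' * edge e' * mu (rg e') es')"
    by (rule cong_mult[OF mu_star_Cons[OF assms(1)] mu_Cons[OF assms(2)]])
  also have "\<dots> = mu_star (rg e) es * (ghost e * vtx v) * (vtx v' * edge e' * mu (rg e') es')" by (simp add: mult.assoc)
  also have "\<dots> \<approx> mu_star (rg e) es * ghost e * (vtx v' * edge e' * mu (rg e') es')"
    using vals e ghost_src_vtx[OF e(1)] by (intro cong_ctx) (auto simp: free_alg_mult)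
  also have "\<dots> = mu_star (rg e) es * ghost e * (vtx v' * edge e') * mu (rg e') es'" by (simp add: mult.assoc)
  also have "\<dots> \<approx> mu_star (rg e) es * ghost e * edge e' * mu (rg e') es'"
    using vals e' src_vtx_edge[OF e'(1)] by (intro cong_ctx) (auto simp: free_alg_mult)
  also have "\<dots> = mu_star (rg e) es * (ghost e * edge e') * mu (rg e') es'" by (simp add: mult.assoc)
  also have "\<dots> \<approx> mu_star (rg e) es * (if e = e' then vtx (rg e) else 0) * mu (rg e') es'"
    using vals e e' by (intro cong_ctx ghost_mult_edge) auto
  also have "\<dots> \<approx> (if e = e' then mu_star (rg e) es * mu (rg e) es' else 0)"
  proof (cases "e = e'")
    case True
    have "mu_star (rg e) es * vtx (rg e) * mu (rg e) es' = mu_star (rg e) es * (vtx (rg e) * mu (rg e) es') * 1"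
      by (simp add: mult.assoc)
    also have "\<dots> \<approx> mu_star (rg e) es * mu (rg e) es' * 1"
      using vals True e' by (intro cong_ctx vtx_mu) (auto simp: free_alg_1)
    finally show ?thesis using True by simp
  next
    case False
    then show ?thesis using cong_refl[OF free_alg_0] by simp
  qed
  finally show ?thesis .
qed

lemma mu_star_mult_mu_extension:
  "path v (es @ ks) \<Longrightarrow> mu_star v es * mu v (es @ ks) \<approx> mu (path_end rg v es) ks"
proof (induction es arbitrary: v)
  case Nil
  then show ?case using mu_star_Nil_mult_mu[of v v ks] by (simp add: epath_start)
next
  case (Cons e es)
  have e: "path (rg e) (es @ ks)" "path v (e # es)" using Cons.prems by (auto simp: epath_append)
  have "path v (e # (es @ ks))" using Cons.prems by simp
  from mu_star_mult_mu_Cons[OF e(2) this]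
  have "mu_star v (e # es) * mu v (e # (es @ ks)) \<approx> mu_star (rg e) es * mu (rg e) (es @ ks)" by simp
  also have "\<dots> \<approx> mu (path_end rg (rg e) es) ks" using Cons.IH[OF e(1)] .
  finally show ?case by simp
qed

lemma mu_star_extension_mult_mu:
  "path v (es @ ks) \<Longrightarrow> mu_star v (es @ ks) * mu v es \<approx> mu_star (path_end rg v es) ks"
proof (induction es arbitrary: v)
  case Nil
  then show ?case using mu_star_mult_mu_Nil[of v ks v] by (simp add: epath_start)
next
  case (Cons e es)
  have e: "path (rg e) (es @ ks)" "path v (e # es)" using Cons.prems by (auto simp: epath_append)
  have "path v (e # (es @ ks))" using Cons.prems by simp
  from mu_star_mult_mu_Cons[OF this e(2)]
  have "mu_star v (e # (es @ ks)) * mu v (e # es) \<approx> mu_star (rg e) (es @ ks) * mu (rg e) es" by simp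
  also have "\<dots> \<approx> mu_star (path_end rg (rg e) es) ks" using Cons.IH[OF e(1)] .
  finally show ?case by simp
qed

lemma mu_star_mult_mu_incomparable:
  "path v es \<Longrightarrow> path v' es' \<Longrightarrow> \<not> (v = v' \<and> ((\<exists>ks. es' = es @ ks) \<or> (\<exists>ks. es = es' @ ks)))
   \<Longrightarrow> mu_star v es * mu v' es' \<approx> 0"
proof (induction es arbitrary: v v' es')
  case Nil
  then show ?case using mu_star_Nil_mult_mu[of v v' es'] by (auto simp: epath_start)
next
  case (Cons e es)
  show ?case
  proof (cases es')
    case Nil
    then show ?thesis using Cons.prems mu_star_mult_mu_Nil[of v "e # es" v'] by (auto simp: epath_start)
  next
    case (Cons e' es'')
    note es' = this
    have c1: "path v (e # es)" "path v' (e' # es'')" using Cons.prems es' by auto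
    show ?thesis
    proof (cases "e = e'")
      case False
      then show ?thesis using mu_star_mult_mu_Cons[OF c1] es' by simp
    next
      case True
      have "v = v'" using c1 True by auto
      then have "\<not> (rg e = rg e \<and> ((\<exists>ks. es'' = es @ ks) \<or> (\<exists>ks. es = es'' @ ks)))"
        using Cons.prems(3) es' True by auto
      then have "mu_star (rg e) es * mu (rg e) es'' \<approx> 0"
        using Cons.IH[of "rg e" "rg e" es''] c1 True by auto
      then show ?thesis using mu_star_mult_mu_Cons[OF c1] es' True cong_trans by fastforce
    qed
  qed
qed

lemma free_alg_scalar_mult: "X \<in> free_alg \<Longrightarrow> monom c [] * X \<in> free_alg"
  by (intro free_alg_mult free_alg_monom) (auto simp: valid_word_def)

lemma matrix_sum_mult_cong:
  fixes L :: "'a \<Rightarrow> ('v,'e,'r) gen_series" and M N D :: "'b \<Rightarrow> ('v,'e,'r) gen_series" and K :: "'c \<Rightarrow> ('v,'e,'r) gen_series"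
  assumes fin: "finite S1" "finite S2" "finite S3"
    and V: "\<And>a. a \<in> S1 \<Longrightarrow> L a \<in> free_alg"
           "\<And>b. b \<in> S2 \<Longrightarrow> M b \<in> free_alg" "\<And>b. b \<in> S2 \<Longrightarrow> N b \<in> free_alg" "\<And>b. b \<in> S2 \<Longrightarrow> D b \<in> free_alg"
           "\<And>c. c \<in> S3 \<Longrightarrow> K c \<in> free_alg"
    and CC: "\<And>a. central_coeffs (L a)" "\<And>b. central_coeffs (M b)"
    and O: "\<And>b b'. b \<in> S2 \<Longrightarrow> b' \<in> S2 \<Longrightarrow> M b * N b' \<approx> (if b = b' then D b else 0)"
    and C: "\<And>a b c. a \<in> S1 \<Longrightarrow> b \<in> S2 \<Longrightarrow> c \<in> S3 \<Longrightarrow> \<alpha> a b * \<beta> b c \<noteq> 0 \<Longrightarrow>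
              L a * D b * K c \<approx> L a * K c"
  shows "(\<Sum>a\<in>S1. \<Sum>b\<in>S2. monom (\<alpha> a b) [] * (L a * M b)) * (\<Sum>b'\<in>S2. \<Sum>c\<in>S3. monom (\<beta> b' c) [] * (N b' * K c))
         \<approx> (\<Sum>a\<in>S1. \<Sum>c\<in>S3. monom (\<Sum>b\<in>S2. \<alpha> a b * \<beta> b c) [] * (L a * K c))"
proof -
  have "(\<Sum>a\<in>S1. \<Sum>b\<in>S2. monom (\<alpha> a b) [] * (L a * M b)) * (\<Sum>b'\<in>S2. \<Sum>c\<in>S3. monom (\<beta> b' c) [] * (N b' * K c))
      = (\<Sum>a\<in>S1. \<Sum>b\<in>S2. \<Sum>c\<in>S3. \<Sum>b'\<in>S2. monom (\<alpha> a b * \<beta> b' c) [] * (L a * (M b * N b') * K c))"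
    using CC by (rule double_sum_mult_expand)
  also have "\<dots> \<approx> (\<Sum>a\<in>S1. \<Sum>b\<in>S2. \<Sum>c\<in>S3. \<Sum>b'\<in>S2. monom (\<alpha> a b * \<beta> b' c) [] * (L a * (if b = b' then D b else 0) * K c))"
    using V O by (intro cong_sum cong_mult_left cong_ctx) (auto simp: free_alg_monom valid_word_def)
  also have "\<dots> = (\<Sum>a\<in>S1. \<Sum>b\<in>S2. \<Sum>c\<in>S3. monom (\<alpha> a b * \<beta> b c) [] * (L a * D b * K c))"
  proof (intro sum.cong refl)
    fix a b c assume b: "b \<in> S2"
    have "(\<Sum>b'\<in>S2. monom (\<alpha> a b * \<beta> b' c) [] * (L a * (if b = b' then D b else 0) * K c))
        = (\<Sum>b'\<in>S2. if b = b' then monom (\<alpha> a b * \<beta> b c) [] * (L a * D b * K c) else 0)"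
      by (intro sum.cong refl) auto
    also have "\<dots> = monom (\<alpha> a b * \<beta> b c) [] * (L a * D b * K c)" using b fin by simp
    finally show "(\<Sum>b'\<in>S2. monom (\<alpha> a b * \<beta> b' c) [] * (L a * (if b = b' then D b else 0) * K c))
        = monom (\<alpha> a b * \<beta> b c) [] * (L a * D b * K c)" .
  qed
  also have "\<dots> \<approx> (\<Sum>a\<in>S1. \<Sum>b\<in>S2. \<Sum>c\<in>S3. monom (\<alpha> a b * \<beta> b c) [] * (L a * K c))"
  proof (intro cong_sum)
    fix a b c assume abc: "a \<in> S1" "b \<in> S2" "c \<in> S3"
    show "monom (\<alpha> a b * \<beta> b c) [] * (L a * D b * K c) \<approx> monom (\<alpha> a b * \<beta> b c) [] * (L a * K c)"
    proof (cases "\<alpha> a b * \<beta> b c = 0")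
      case True then show ?thesis by (simp add: cong_refl free_alg_0)
    next
      case False
      then show ?thesis using C[OF abc False] by (intro cong_mult_left) (auto simp: free_alg_monom valid_word_def)
    qed
  qed
  also have "\<dots> = (\<Sum>a\<in>S1. \<Sum>c\<in>S3. monom (\<Sum>b\<in>S2. \<alpha> a b * \<beta> b c) [] * (L a * K c))"
    by (simp add: monom_sum sum_distrib_right sum.swap[of _ S2 S3])
  finally show ?thesis .
qed

lemma matrix_sum_regular:
  fixes Ur Ur' Hr :: "'a \<Rightarrow> ('v,'e,'r) gen_series" and Uc Uc' Hc :: "'b \<Rightarrow> ('v,'e,'r) gen_series"
    and A :: "'a \<Rightarrow> 'b \<Rightarrow> 'r" and B :: "'b \<Rightarrow> 'a \<Rightarrow> 'r"
  assumes fin: "finite R" "finite C" and reg: "regular_on R C A B"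
    and V: "\<And>p. p \<in> R \<Longrightarrow> Ur p \<in> free_alg" "\<And>p. p \<in> R \<Longrightarrow> Ur' p \<in> free_alg" "\<And>p. p \<in> R \<Longrightarrow> Hr p \<in> free_alg"
           "\<And>q. q \<in> C \<Longrightarrow> Uc q \<in> free_alg" "\<And>q. q \<in> C \<Longrightarrow> Uc' q \<in> free_alg" "\<And>q. q \<in> C \<Longrightarrow> Hc q \<in> free_alg"
    and CC: "\<And>p. central_coeffs (Ur p)" "\<And>p. central_coeffs (Ur' p)" "\<And>q. central_coeffs (Uc' q)"
    and O1: "\<And>q q'. q \<in> C \<Longrightarrow> q' \<in> C \<Longrightarrow> Uc' q * Uc q' \<approx> (if q = q' then Hc q else 0)"
    and O2: "\<And>p p'. p \<in> R \<Longrightarrow> p' \<in> R \<Longrightarrow> Ur' p * Ur p' \<approx> (if p = p' then Hr p else 0)"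
    and C1: "\<And>p q. p \<in> R \<Longrightarrow> q \<in> C \<Longrightarrow> A p q \<noteq> 0 \<Longrightarrow> Ur p * Hc q \<approx> Ur p"
    and C2: "\<And>p q. p \<in> R \<Longrightarrow> q \<in> C \<Longrightarrow> A p q \<noteq> 0 \<Longrightarrow> Hr p * Uc' q \<approx> Uc' q"
  shows "(\<Sum>p\<in>R. \<Sum>q\<in>C. monom (A p q) [] * (Ur p * Uc' q)) * (\<Sum>q\<in>C. \<Sum>p\<in>R. monom (B q p) [] * (Uc q * Ur' p))
         * (\<Sum>p\<in>R. \<Sum>q\<in>C. monom (A p q) [] * (Ur p * Uc' q))
         \<approx> (\<Sum>p\<in>R. \<Sum>q\<in>C. monom (A p q) [] * (Ur p * Uc' q))"
proof -
  let ?X = "(\<Sum>p\<in>R. \<Sum>q\<in>C. monom (A p q) [] * (Ur p * Uc' q))"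
  let ?AB = "\<lambda>p p'. \<Sum>q\<in>C. A p q * B q p'"
  have XV: "?X \<in> free_alg" using V by (intro free_alg_sum free_alg_scalar_mult free_alg_mult) auto
  have s1: "?X * (\<Sum>q\<in>C. \<Sum>p\<in>R. monom (B q p) [] * (Uc q * Ur' p))
      \<approx> (\<Sum>p\<in>R. \<Sum>p'\<in>R. monom (?AB p p') [] * (Ur p * Ur' p'))"
  proof (rule matrix_sum_mult_cong[OF fin(1) fin(2) fin(1)])
    fix p q p' assume pqp: "p \<in> R" "q \<in> C" "p' \<in> R" and nz: "A p q * B q p' \<noteq> 0"
    then have "A p q \<noteq> 0" by auto
    then show "Ur p * Hc q * Ur' p' \<approx> Ur p * Ur' p'"
      using C1 pqp V by (intro cong_mult_right) auto
  qed (use V CC O1 in auto)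
  have s2: "(\<Sum>p\<in>R. \<Sum>p'\<in>R. monom (?AB p p') [] * (Ur p * Ur' p')) * ?X
      \<approx> (\<Sum>p\<in>R. \<Sum>q\<in>C. monom (\<Sum>p'\<in>R. ?AB p p' * A p' q) [] * (Ur p * Uc' q))"
  proof (rule matrix_sum_mult_cong[OF fin(1) fin(1) fin(2)])
    fix p p' q assume pqp: "p \<in> R" "p' \<in> R" "q \<in> C" and nz: "?AB p p' * A p' q \<noteq> 0"
    then have "A p' q \<noteq> 0" by auto
    then have "Hr p' * Uc' q \<approx> Uc' q" using C2 pqp by auto
    then have "Ur p * (Hr p' * Uc' q) \<approx> Ur p * Uc' q" using V pqp by (intro cong_mult_left) auto
    then show "Ur p * Hr p' * Uc' q \<approx> Ur p * Uc' q" by (simp add: mult.assoc)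
  qed (use V CC O2 in auto)
  have s3: "(\<Sum>p\<in>R. \<Sum>q\<in>C. monom (\<Sum>p'\<in>R. ?AB p p' * A p' q) [] * (Ur p * Uc' q)) = ?X"
    using reg by (intro sum.cong refl) (simp add: regular_on_def matmul_def)
  have "?X * (\<Sum>q\<in>C. \<Sum>p\<in>R. monom (B q p) [] * (Uc q * Ur' p)) * ?X
      \<approx> (\<Sum>p\<in>R. \<Sum>p'\<in>R. monom (?AB p p') [] * (Ur p * Ur' p')) * ?X"
    using s1 XV by (rule cong_mult_right[rotated])
  also note s2
  also note s3
  finally show ?thesis .
qed

end

section \<open>Gap idempotents and matrix units\<close>

lemma common_padding:
  fixes a b :: "nat \<Rightarrow> nat"
  assumes "\<And>k. k < m \<Longrightarrow> int (a k) - int (b k) = n"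
  shows "\<exists>Ma Mb d. \<forall>k<m. a k + d k = Ma \<and> b k + d k = Mb"
proof -
  define Mb where "Mb = (\<Sum>k<m. a k + b k)"
  have "b k \<le> Mb" if "k < m" for k
    using that member_le_sum[of k "{..<m}" "\<lambda>k. a k + b k"] by (simp add: Mb_def)
  then have "\<forall>k<m. a k + (Mb - b k) = nat (int Mb + n) \<and> b k + (Mb - b k) = Mb"
    using assms by force
  then show ?thesis by (intro exI[of _ "nat (int Mb + n)"] exI[of _ Mb] exI[of _ "\<lambda>k. Mb - b k"])
qed

locale lpa_fin = lpa V0 E1 rg sc rty for V0 :: "'v set" and E1 :: "'e set" and rg sc :: "'e \<Rightarrow> 'v"
  and rty :: "'r::ring_1 itself" +
  fixes F :: "'e set"
  assumes finite_F: "finite F" and F_edges: "F \<subseteq> E1"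
begin

definition ee_sum :: "'v \<Rightarrow> ('v,'e,'r) gen_series" where
  "ee_sum w = (\<Sum>e\<in>{e\<in>F. sc e = w}. edge e * ghost e)"
(* Since F is finite, vtx w = gap w + ee_sum w holds by definition, so no Cuntz-Krieger
   relation is used (it fails at infinite emitters). *)
definition gap :: "'v \<Rightarrow> ('v,'e,'r) gen_series" where
  "gap w = vtx w - ee_sum w"

lemma finite_F_out: "finite {e\<in>F. sc e = w}" using finite_F by simp

lemma free_alg_ee_sum: "ee_sum w \<in> free_alg"
  unfolding ee_sum_def using F_edges by (intro free_alg_sum free_alg_mult) (auto simp: free_alg_edge free_alg_ghost)
lemma free_alg_gap: "w \<in> V0 \<Longrightarrow> gap w \<in> free_alg"
  unfolding gap_def by (intro free_alg_diff free_alg_ee_sum free_alg_vtx)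
lemma central_coeffs_ee_sum: "central_coeffs (ee_sum w)"
  unfolding ee_sum_def by (intro central_coeffs_sum central_coeffs_mult) (auto simp: central_coeffs_edge central_coeffs_ghost)
lemma central_coeffs_gap: "central_coeffs (gap w)"
  unfolding gap_def by (intro central_coeffs_diff central_coeffs_ee_sum central_coeffs_vtx)

lemma vtx_ee_sum: "w \<in> V0 \<Longrightarrow> vtx w * ee_sum w \<approx> ee_sum w"
proof -
  assume w: "w \<in> V0"
  have "vtx w * ee_sum w = (\<Sum>e\<in>{e\<in>F. sc e = w}. vtx w * edge e * ghost e)"
    by (simp add: ee_sum_def sum_distrib_left mult.assoc)
  also have "\<dots> \<approx> (\<Sum>e\<in>{e\<in>F. sc e = w}. edge e * ghost e)"
  proof (rule cong_sum)
    fix e assume e: "e \<in> {e\<in>F. sc e = w}"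
    then have "e \<in> E1" using F_edges by auto
    then show "vtx w * edge e * ghost e \<approx> edge e * ghost e"
      using e src_vtx_edge[of e] by (intro cong_mult_right) (auto simp: free_alg_ghost)
  qed
  finally show ?thesis by (simp add: ee_sum_def)
qed

lemma ee_sum_vtx: "w \<in> V0 \<Longrightarrow> ee_sum w * vtx w \<approx> ee_sum w"
proof -
  assume w: "w \<in> V0"
  have "ee_sum w * vtx w = (\<Sum>e\<in>{e\<in>F. sc e = w}. edge e * (ghost e * vtx w))"
    by (simp add: ee_sum_def sum_distrib_right mult.assoc)
  also have "\<dots> \<approx> (\<Sum>e\<in>{e\<in>F. sc e = w}. edge e * ghost e)"
  proof (rule cong_sum)
    fix e assume e: "e \<in> {e\<in>F. sc e = w}"
    then have "e \<in> E1" using F_edges by auto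
    then show "edge e * (ghost e * vtx w) \<approx> edge e * ghost e"
      using e ghost_src_vtx[of e] by (intro cong_mult_left) (auto simp: free_alg_edge)
  qed
  finally show ?thesis by (simp add: ee_sum_def)
qed

lemma vtx_gap: "w \<in> V0 \<Longrightarrow> vtx w * gap w \<approx> gap w"
proof -
  assume w: "w \<in> V0"
  have "vtx w * gap w = vtx w * vtx w - vtx w * ee_sum w" by (simp add: gap_def right_diff_distrib)
  also have "\<dots> \<approx> vtx w - ee_sum w" using w by (intro cong_diff vtx_idem vtx_ee_sum)
  finally show ?thesis by (simp add: gap_def)
qed

lemma gap_vtx: "w \<in> V0 \<Longrightarrow> gap w * vtx w \<approx> gap w"
proof -
  assume w: "w \<in> V0"
  have "gap w * vtx w = vtx w * vtx w - ee_sum w * vtx w" by (simp add: gap_def left_diff_distrib)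
  also have "\<dots> \<approx> vtx w - ee_sum w" using w by (intro cong_diff vtx_idem ee_sum_vtx)
  finally show ?thesis by (simp add: gap_def)
qed

lemma ee_sum_edge: "e \<in> F \<Longrightarrow> sc e = w \<Longrightarrow> ee_sum w * edge e \<approx> edge e"
proof -
  assume e: "e \<in> F" "sc e = w"
  have eE: "e \<in> E1" using e F_edges by auto
  have "ee_sum w * edge e = (\<Sum>e'\<in>{e\<in>F. sc e = w}. edge e' * (ghost e' * edge e))"
    by (simp add: ee_sum_def sum_distrib_right mult.assoc)
  also have "\<dots> \<approx> (\<Sum>e'\<in>{e\<in>F. sc e = w}. edge e' * (if e' = e then vtx (rg e') else 0))"
  proof (rule cong_sum)
    fix e' assume e': "e' \<in> {e\<in>F. sc e = w}"
    then have "e' \<in> E1" using F_edges by auto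
    then show "edge e' * (ghost e' * edge e) \<approx> edge e' * (if e' = e then vtx (rg e') else 0)"
      using ghost_mult_edge[of e' e] eE by (intro cong_mult_left) (auto simp: free_alg_edge)
  qed
  also have "\<dots> = (\<Sum>e'\<in>{e\<in>F. sc e = w}. if e' = e then edge e' * vtx (rg e') else 0)"
    by (intro sum.cong) auto
  also have "\<dots> = edge e * vtx (rg e)" using e finite_F_out[of w] by (simp add: sum.delta)
  also have "\<dots> \<approx> edge e" using edge_rng_vtx eE by simp
  finally show ?thesis .
qed

lemma ghost_ee_sum: "e \<in> F \<Longrightarrow> sc e = w \<Longrightarrow> ghost e * ee_sum w \<approx> ghost e"
proof -
  assume e: "e \<in> F" "sc e = w"
  have eE: "e \<in> E1" using e F_edges by auto
  have "ghost e * ee_sum w = (\<Sum>e'\<in>{e\<in>F. sc e = w}. (ghost e * edge e') * ghost e')"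
    by (simp add: ee_sum_def sum_distrib_left mult.assoc)
  also have "\<dots> \<approx> (\<Sum>e'\<in>{e\<in>F. sc e = w}. (if e = e' then vtx (rg e) else 0) * ghost e')"
  proof (rule cong_sum)
    fix e' assume e': "e' \<in> {e\<in>F. sc e = w}"
    then have "e' \<in> E1" using F_edges by auto
    then show "(ghost e * edge e') * ghost e' \<approx> (if e = e' then vtx (rg e) else 0) * ghost e'"
      using ghost_mult_edge[of e e'] eE by (intro cong_mult_right) (auto simp: free_alg_ghost)
  qed
  also have "\<dots> = (\<Sum>e'\<in>{e\<in>F. sc e = w}. if e = e' then vtx (rg e) * ghost e else 0)"
    by (intro sum.cong) auto
  also have "\<dots> = vtx (rg e) * ghost e" using e finite_F_out[of w] by (simp add: sum.delta')
  also have "\<dots> \<approx> ghost e" using rng_vtx_ghost eE by simp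
  finally show ?thesis .
qed

lemma gap_edge: "e \<in> F \<Longrightarrow> sc e = w \<Longrightarrow> gap w * edge e \<approx> 0"
proof -
  assume e: "e \<in> F" "sc e = w"
  have eE: "e \<in> E1" using e F_edges by auto
  have "gap w * edge e = vtx w * edge e - ee_sum w * edge e" by (simp add: gap_def left_diff_distrib)
  also have "\<dots> \<approx> edge e - edge e" using e eE src_vtx_edge[of e] by (intro cong_diff ee_sum_edge) auto
  finally show ?thesis by simp
qed

lemma ghost_gap: "e \<in> F \<Longrightarrow> sc e = w \<Longrightarrow> ghost e * gap w \<approx> 0"
proof -
  assume e: "e \<in> F" "sc e = w"
  have eE: "e \<in> E1" using e F_edges by auto
  have "ghost e * gap w = ghost e * vtx w - ghost e * ee_sum w" by (simp add: gap_def right_diff_distrib)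
  also have "\<dots> \<approx> ghost e - ghost e" using e eE ghost_src_vtx[of e] by (intro cong_diff ghost_ee_sum) auto
  finally show ?thesis by simp
qed

lemma gap_idem: "w \<in> V0 \<Longrightarrow> gap w * gap w \<approx> gap w"
proof -
  assume w: "w \<in> V0"
  have "gap w * gap w = gap w * vtx w - (\<Sum>e\<in>{e\<in>F. sc e = w}. gap w * edge e * ghost e)"
    by (simp add: gap_def[of w] right_diff_distrib ee_sum_def sum_distrib_left mult.assoc)
  also have "\<dots> \<approx> gap w - (\<Sum>e\<in>{e\<in>F. sc e = w}. 0)"
  proof (rule cong_diff)
    show "gap w * vtx w \<approx> gap w" using gap_vtx w .
    show "(\<Sum>e\<in>{e\<in>F. sc e = w}. gap w * edge e * ghost e) \<approx> (\<Sum>e\<in>{e\<in>F. sc e = w}. 0)"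
    proof (rule cong_sum)
      fix e assume e: "e \<in> {e\<in>F. sc e = w}"
      then have "e \<in> E1" using F_edges by auto
      moreover have "gap w * edge e \<approx> 0" using e by (intro gap_edge) auto
      ultimately show "gap w * edge e * ghost e \<approx> 0" using cong_zero_left free_alg_ghost by blast
    qed
  qed
  finally show ?thesis by simp
qed

lemma gap_mu: "e \<in> F \<Longrightarrow> path w (e # ks) \<Longrightarrow> gap w * mu w (e # ks) \<approx> 0"
proof -
  assume e: "e \<in> F" and p: "path w (e # ks)"
  have e2: "sc e = w" "w \<in> V0" "e \<in> E1" "path (rg e) ks" using p by auto
  have "gap w * mu w (e # ks) \<approx> gap w * (vtx w * edge e * mu (rg e) ks)"
    using mu_Cons[OF p] e2 by (intro cong_mult_left free_alg_gap)
  also have "\<dots> = (gap w * vtx w) * edge e * mu (rg e) ks" by (simp add: mult.assoc)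
  also have "\<dots> \<approx> gap w * edge e * mu (rg e) ks"
    using e2 gap_vtx[of w] by (intro cong_mult_right) (auto simp: free_alg_edge free_alg_mu)
  also have "\<dots> \<approx> 0"
    using e2 e cong_zero_left[OF gap_edge[of e w] free_alg_mu[of "rg e" ks]] by auto
  finally show ?thesis .
qed

lemma mu_star_gap: "e \<in> F \<Longrightarrow> path w (e # ks) \<Longrightarrow> mu_star w (e # ks) * gap w \<approx> 0"
proof -
  assume e: "e \<in> F" and p: "path w (e # ks)"
  have e2: "sc e = w" "w \<in> V0" "e \<in> E1" "path (rg e) ks" using p by auto
  have "mu_star w (e # ks) * gap w \<approx> (mu_star (rg e) ks * ghost e * vtx w) * gap w"
    using mu_star_Cons[OF p] e2 by (intro cong_mult_right free_alg_gap)
  also have "\<dots> = mu_star (rg e) ks * ghost e * (vtx w * gap w)" by (simp add: mult.assoc)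
  also have "\<dots> \<approx> mu_star (rg e) ks * ghost e * gap w"
    using e2 vtx_gap[of w] by (intro cong_mult_left) (auto simp: free_alg_ghost free_alg_mu_star free_alg_mult)
  also have "\<dots> = mu_star (rg e) ks * (ghost e * gap w)" by (simp add: mult.assoc)
  also have "\<dots> \<approx> 0"
    using e2 e cong_zero_right[OF ghost_gap[of e w] free_alg_mu_star[of "rg e" ks]] by auto
  finally show ?thesis .
qed

definition fpaths :: "'v \<Rightarrow> nat \<Rightarrow> 'e list set" where
  "fpaths w d = {ks. set ks \<subseteq> F \<and> path w ks \<and> length ks \<le> d}"

lemma finite_fpaths: "finite (fpaths w d)"
  unfolding fpaths_def
  by (rule finite_subset[OF _ finite_lists_length_le[OF finite_F, of d]]) auto

lemma fpaths_0: "w \<in> V0 \<Longrightarrow> fpaths w 0 = {[]}"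
  by (auto simp: fpaths_def)

lemma fpaths_Suc: "w \<in> V0 \<Longrightarrow>
  fpaths w (Suc d) = insert [] ((\<lambda>(e, ks). e # ks) ` (SIGMA e:{e\<in>F. sc e = w}. fpaths (rg e) d))"
proof (intro equalityI subsetI)
  fix ks assume w: "w \<in> V0" and ks: "ks \<in> fpaths w (Suc d)"
  show "ks \<in> insert [] ((\<lambda>(e, ks). e # ks) ` (SIGMA e:{e\<in>F. sc e = w}. fpaths (rg e) d))"
  proof (cases ks)
    case Nil then show ?thesis by simp
  next
    case (Cons e ks')
    then show ?thesis using ks by (auto simp: fpaths_def)
  qed
next
  fix ks assume w: "w \<in> V0" and ks: "ks \<in> insert [] ((\<lambda>(e, ks). e # ks) ` (SIGMA e:{e\<in>F. sc e = w}. fpaths (rg e) d))"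
  then show "ks \<in> fpaths w (Suc d)" using F_edges by (auto simp: fpaths_def)
qed

lemma sum_fpaths_Suc:
  assumes "w \<in> V0"
  shows "(\<Sum>ks\<in>fpaths w (Suc d). f ks) = f [] + (\<Sum>e\<in>{e\<in>F. sc e = w}. \<Sum>ks\<in>fpaths (rg e) d. f (e # ks))"
proof -
  have fin: "finite (SIGMA e:{e\<in>F. sc e = w}. fpaths (rg e) d)"
    using finite_F finite_fpaths by auto
  have inj: "inj_on (\<lambda>(e, ks). e # ks) (SIGMA e:{e\<in>F. sc e = w}. fpaths (rg e) d)"
    by (auto simp: inj_on_def)
  have "(\<Sum>ks\<in>fpaths w (Suc d). f ks) = f [] + (\<Sum>ks\<in>(\<lambda>(e, ks). e # ks) ` (SIGMA e:{e\<in>F. sc e = w}. fpaths (rg e) d). f ks)"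
    unfolding fpaths_Suc[OF assms] using fin by (subst sum.insert) auto
  also have "(\<Sum>ks\<in>(\<lambda>(e, ks). e # ks) ` (SIGMA e:{e\<in>F. sc e = w}. fpaths (rg e) d). f ks)
      = (\<Sum>(e,ks)\<in>(SIGMA e:{e\<in>F. sc e = w}. fpaths (rg e) d). f (e # ks))"
    using sum.reindex[OF inj, of f] by (simp add: case_prod_beta')
  also have "\<dots> = (\<Sum>e\<in>{e\<in>F. sc e = w}. \<Sum>ks\<in>fpaths (rg e) d. f (e # ks))"
    using finite_F finite_fpaths by (subst sum.Sigma) auto
  finally show ?thesis .
qed

(* The summands obtained by inserting r(mu) = gap + ee_sum d times into mu * mu_star. *)
definition expansion_term :: "'v \<Rightarrow> 'e list \<Rightarrow> 'v \<Rightarrow> 'e list \<Rightarrow> nat \<Rightarrow> 'e list \<Rightarrow> ('v,'e,'r) gen_series" where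
  "expansion_term v es v' es' d ks = (if length ks < d then mu v (es @ ks) * gap (path_end rg v (es @ ks)) * mu_star v' (es' @ ks)
      else mu v (es @ ks) * mu_star v' (es' @ ks))"

lemma mu_snoc: "mu v (es @ [e]) = mu v es * edge e" by (simp add: mu_def edge_path_def edge_def mult.assoc monom_mult)
lemma mu_star_snoc: "mu_star v (es @ [e]) = ghost e * mu_star v es" by (simp add: mu_star_def ghost_path_def ghost_def mult.assoc[symmetric] monom_mult)

lemma mu_mu_star_expansion:
  "path v es \<Longrightarrow> path v' es' \<Longrightarrow> path_end rg v es = path_end rg v' es' \<Longrightarrow>
   mu v es * mu_star v' es' \<approx> (\<Sum>ks\<in>fpaths (path_end rg v es) d. expansion_term v es v' es' d ks)"
proof (induction d arbitrary: es es')
  case 0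
  have w: "path_end rg v es \<in> V0" using 0 epath_end by metis
  show ?case using w 0 by (simp add: fpaths_0 expansion_term_def cong_refl free_alg_mult free_alg_mu free_alg_mu_star)
next
  case (Suc d)
  define w where "w = path_end rg v es"
  have w: "w \<in> V0" unfolding w_def using Suc.prems epath_end by metis
  have "mu v es * mu_star v' es' \<approx> mu v es * vtx w * mu_star v' es'"
    using cong_mult_right[OF free_alg_mu_star[OF Suc.prems(2)] cong_sym[OF mu_vtx_end[OF Suc.prems(1)]]]
    by (simp add: w_def)
  also have "\<dots> = mu v es * gap w * mu_star v' es' + (\<Sum>e\<in>{e\<in>F. sc e = w}. mu v (es @ [e]) * mu_star v' (es' @ [e]))"
    by (simp add: gap_def ee_sum_def mu_snoc mu_star_snoc algebra_simps sum_distrib_left sum_distrib_right)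
  also have "\<dots> \<approx> mu v es * gap w * mu_star v' es' + (\<Sum>e\<in>{e\<in>F. sc e = w}. \<Sum>ks\<in>fpaths (rg e) d. expansion_term v (es @ [e]) v' (es' @ [e]) d ks)"
  proof (rule cong_add)
    show "mu v es * gap w * mu_star v' es' \<approx> mu v es * gap w * mu_star v' es'"
      using Suc.prems w by (intro cong_refl free_alg_mult free_alg_mu free_alg_mu_star free_alg_gap)
    show "(\<Sum>e\<in>{e\<in>F. sc e = w}. mu v (es @ [e]) * mu_star v' (es' @ [e])) \<approx>
          (\<Sum>e\<in>{e\<in>F. sc e = w}. \<Sum>ks\<in>fpaths (rg e) d. expansion_term v (es @ [e]) v' (es' @ [e]) d ks)"
    proof (rule cong_sum)
      fix e assume e: "e \<in> {e\<in>F. sc e = w}"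
      have p1: "path v (es @ [e])" "path v' (es' @ [e])"
        using e Suc.prems F_edges w edges_in_V0 unfolding w_def by (auto simp: epath_append)
      have "path_end rg v (es @ [e]) = rg e" "path_end rg v' (es' @ [e]) = rg e"
        using Suc.prems(3) by (simp_all add: path_end_append w_def)
      then show "mu v (es @ [e]) * mu_star v' (es' @ [e]) \<approx> (\<Sum>ks\<in>fpaths (rg e) d. expansion_term v (es @ [e]) v' (es' @ [e]) d ks)"
        using Suc.IH[OF p1] by simp
    qed
  qed
  also have "\<dots> = (\<Sum>ks\<in>fpaths w (Suc d). expansion_term v es v' es' (Suc d) ks)"
  proof -
    have "expansion_term v (es @ [e]) v' (es' @ [e]) d ks = expansion_term v es v' es' (Suc d) (e # ks)" for e ks
      by (simp add: expansion_term_def)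
    moreover have "expansion_term v es v' es' (Suc d) [] = mu v es * gap w * mu_star v' es'"
      by (simp add: expansion_term_def w_def)
    ultimately show ?thesis unfolding sum_fpaths_Suc[OF w] by simp
  qed
  finally show ?case by (simp add: w_def)
qed
(* Row and column elements of the matrix-unit system: the pad is the gap idempotent below the
   length bound M and 1 at the bound, where the expansion stops. *)
definition pad :: "nat \<Rightarrow> 'v \<Rightarrow> 'e list \<Rightarrow> ('v,'e,'r) gen_series" where
  "pad M v es = (if length es < M then gap (path_end rg v es) else 1)"
definition row_unit :: "nat \<Rightarrow> 'v \<Rightarrow> 'e list \<Rightarrow> ('v,'e,'r) gen_series" where
  "row_unit M v es = mu v es * pad M v es"
definition col_unit :: "nat \<Rightarrow> 'v \<Rightarrow> 'e list \<Rightarrow> ('v,'e,'r) gen_series" where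
  "col_unit M v es = pad M v es * mu_star v es"
definition unit_idem :: "nat \<Rightarrow> 'v \<Rightarrow> 'e list \<Rightarrow> ('v,'e,'r) gen_series" where
  "unit_idem M v es = (if length es < M then gap (path_end rg v es) else vtx (path_end rg v es))"

lemma free_alg_pad: "path v es \<Longrightarrow> pad M v es \<in> free_alg"
  by (simp add: pad_def free_alg_gap free_alg_1 epath_end)
lemma central_coeffs_pad: "central_coeffs (pad M v es)"
  by (simp add: pad_def central_coeffs_gap central_coeffs_1)
lemma free_alg_row_unit: "path v es \<Longrightarrow> row_unit M v es \<in> free_alg"
  by (simp add: row_unit_def free_alg_pad free_alg_mu free_alg_mult)
lemma free_alg_col_unit: "path v es \<Longrightarrow> col_unit M v es \<in> free_alg"
  by (simp add: col_unit_def free_alg_pad free_alg_mu_star free_alg_mult)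
lemma central_coeffs_row_unit: "central_coeffs (row_unit M v es)"
  by (simp add: row_unit_def central_coeffs_pad central_coeffs_mu central_coeffs_mult)
lemma central_coeffs_col_unit: "central_coeffs (col_unit M v es)"
  by (simp add: col_unit_def central_coeffs_pad central_coeffs_mu_star central_coeffs_mult)
lemma free_alg_unit_idem: "path v es \<Longrightarrow> unit_idem M v es \<in> free_alg"
  by (simp add: unit_idem_def free_alg_gap free_alg_vtx epath_end)

lemma mu_mu_star_unit_expansion:
  assumes p: "path v es" "path v' es'" and r: "path_end rg v es = path_end rg v' es'"
    and l: "length es + d = Mr" "length es' + d = Mc"
  shows "mu v es * mu_star v' es' \<approx> (\<Sum>ks\<in>fpaths (path_end rg v es) d. row_unit Mr v (es @ ks) * col_unit Mc v' (es' @ ks))"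
proof -
  have "mu v es * mu_star v' es' \<approx> (\<Sum>ks\<in>fpaths (path_end rg v es) d. expansion_term v es v' es' d ks)"
    by (rule mu_mu_star_expansion[OF p r])
  also have "\<dots> \<approx> (\<Sum>ks\<in>fpaths (path_end rg v es) d. row_unit Mr v (es @ ks) * col_unit Mc v' (es' @ ks))"
  proof (rule cong_sum)
    fix ks assume ks: "ks \<in> fpaths (path_end rg v es) d"
    have pk: "path v (es @ ks)" "path v' (es' @ ks)" using ks p r by (auto simp: fpaths_def epath_append)
    have re: "path_end rg v' (es' @ ks) = path_end rg v (es @ ks)" using r by (simp add: path_end_append)
    have w: "path_end rg v (es @ ks) \<in> V0" using pk epath_end by metis
    show "expansion_term v es v' es' d ks \<approx> row_unit Mr v (es @ ks) * col_unit Mc v' (es' @ ks)"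
    proof (cases "length ks < d")
      case True
      have "row_unit Mr v (es @ ks) * col_unit Mc v' (es' @ ks) =
            mu v (es @ ks) * (gap (path_end rg v (es @ ks)) * gap (path_end rg v (es @ ks))) * mu_star v' (es' @ ks)"
        using True l re by (simp add: row_unit_def col_unit_def pad_def mult.assoc)
      also have "\<dots> \<approx> mu v (es @ ks) * gap (path_end rg v (es @ ks)) * mu_star v' (es' @ ks)"
        using pk w by (intro cong_ctx gap_idem free_alg_mu free_alg_mu_star)
      finally show ?thesis using True by (simp add: expansion_term_def cong_sym)
    next
      case False
      then have "row_unit Mr v (es @ ks) * col_unit Mc v' (es' @ ks) = expansion_term v es v' es' d ks"
        using l by (simp add: row_unit_def col_unit_def pad_def expansion_term_def)
      moreover have "row_unit Mr v (es @ ks) * col_unit Mc v' (es' @ ks) \<in> free_alg" using pk by (simp add: free_alg_mult free_alg_row_unit free_alg_col_unit)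
      ultimately show ?thesis using cong_refl by metis
    qed
  qed
  finally show ?thesis .
qed

lemma col_unit_mult_row_unit_eq:
  "col_unit M v es * row_unit M v' es' = pad M v es * (mu_star v es * mu v' es') * pad M v' es'"
  by (simp add: row_unit_def col_unit_def mult.assoc)

lemma col_unit_mult_row_unit_same:
  assumes p: "path v es"
  shows "col_unit M v es * row_unit M v es \<approx> unit_idem M v es"
proof -
  define w where "w = path_end rg v es"
  have w: "w \<in> V0" unfolding w_def using p epath_end by metis
  have "mu_star v es * mu v es \<approx> vtx w"
    using mu_star_mult_mu_extension[of v es "[]"] p by (simp add: w_def mu_Nil)
  then have "col_unit M v es * row_unit M v es \<approx> pad M v es * vtx w * pad M v es"
    unfolding col_unit_mult_row_unit_eq using p by (intro cong_ctx free_alg_pad)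
  also have "\<dots> \<approx> unit_idem M v es"
  proof (cases "length es < M")
    case True
    have "pad M v es * vtx w * pad M v es = gap w * vtx w * gap w" using True by (simp add: pad_def w_def)
    also have "\<dots> \<approx> gap w * gap w" using w by (intro cong_mult_right gap_vtx free_alg_gap)
    also have "\<dots> \<approx> gap w" using w by (rule gap_idem)
    finally show ?thesis using True by (simp add: unit_idem_def w_def)
  next
    case False
    then show ?thesis using w by (simp add: pad_def unit_idem_def w_def cong_refl free_alg_vtx)
  qed
  finally show ?thesis .
qed

(* A proper F-extension of a path shorter than M is killed by the gap idempotent at its end. *)

lemma col_unit_mult_row_unit_proper_extension:
  assumes p: "path v (es @ k # ks)" and kF: "k \<in> F" and l: "length es < M"
  shows "col_unit M v es * row_unit M v (es @ k # ks) \<approx> 0"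
    and "col_unit M v (es @ k # ks) * row_unit M v es \<approx> 0"
proof -
  define w where "w = path_end rg v es"
  have pw: "path w (k # ks)" "path v es" using p by (simp_all add: epath_append w_def)
  have vY: "pad M v es \<in> free_alg" "pad M v (es @ k # ks) \<in> free_alg"
    using p pw by (simp_all add: free_alg_pad)
  have "mu_star v es * mu v (es @ k # ks) \<approx> mu w (k # ks)"
    using mu_star_mult_mu_extension[OF p] by (simp add: w_def)
  then have "col_unit M v es * row_unit M v (es @ k # ks) \<approx> pad M v es * mu w (k # ks) * pad M v (es @ k # ks)"
    unfolding col_unit_mult_row_unit_eq using vY by (intro cong_ctx)
  also have "\<dots> = (gap w * mu w (k # ks)) * pad M v (es @ k # ks)" using l by (simp add: pad_def w_def)
  also have "\<dots> \<approx> 0" using cong_zero_left[OF gap_mu[OF kF pw(1)] vY(2)] .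
  finally show "col_unit M v es * row_unit M v (es @ k # ks) \<approx> 0" .
  have "mu_star v (es @ k # ks) * mu v es \<approx> mu_star w (k # ks)"
    using mu_star_extension_mult_mu[OF p] by (simp add: w_def)
  then have "col_unit M v (es @ k # ks) * row_unit M v es \<approx> pad M v (es @ k # ks) * mu_star w (k # ks) * pad M v es"
    unfolding col_unit_mult_row_unit_eq using vY by (intro cong_ctx)
  also have "\<dots> = pad M v (es @ k # ks) * (mu_star w (k # ks) * gap w)" using l by (simp add: pad_def w_def mult.assoc)
  also have "\<dots> \<approx> 0" using cong_zero_right[OF mu_star_gap[OF kF pw(1)] vY(2)] .
  finally show "col_unit M v (es @ k # ks) * row_unit M v es \<approx> 0" .
qed

lemma col_unit_mult_row_unit:
  assumes p: "path v es" "path v' es'" and F: "set es \<subseteq> F" "set es' \<subseteq> F"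
    and l: "length es \<le> M" "length es' \<le> M"
  shows "col_unit M v es * row_unit M v' es' \<approx> (if v = v' \<and> es = es' then unit_idem M v es else 0)"
proof (cases "v = v' \<and> es = es'")
  case True
  then show ?thesis using col_unit_mult_row_unit_same[OF p(1)] by simp
next
  case distinct: False
  consider (longer) k ks where "v = v'" "es' = es @ k # ks"
    | (shorter) k ks where "v = v'" "es = es' @ k # ks"
    | (incomparable) "\<not> (v = v' \<and> ((\<exists>ks. es' = es @ ks) \<or> (\<exists>ks. es = es' @ ks)))"
    using distinct by (metis append.right_neutral neq_Nil_conv)
  then have "col_unit M v es * row_unit M v' es' \<approx> 0"
  proof cases
    case longer
    then show ?thesis using p F l col_unit_mult_row_unit_proper_extension(1)[of v es k ks M] by simp
  next
    case shorter
    then show ?thesis using p F l col_unit_mult_row_unit_proper_extension(2)[of v es' k ks M] by simp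
  next
    case incomparable
    then have "mu_star v es * mu v' es' \<approx> 0" using mu_star_mult_mu_incomparable p by blast
    then have "col_unit M v es * row_unit M v' es' \<approx> pad M v es * 0 * pad M v' es'"
      unfolding col_unit_mult_row_unit_eq using p by (intro cong_ctx free_alg_pad)
    then show ?thesis by simp
  qed
  then show ?thesis by (simp only: distinct if_False)
qed

lemma row_unit_unit_idem:
  assumes p: "path v es" "path v' es'" and r: "path_end rg v es = path_end rg v' es'"
    and l: "length es < Mr \<longleftrightarrow> length es' < Mc"
  shows "row_unit Mr v es * unit_idem Mc v' es' \<approx> row_unit Mr v es"
proof (cases "length es < Mr")
  case True
  have w: "path_end rg v es \<in> V0" using p epath_end by metis
  have "row_unit Mr v es * unit_idem Mc v' es' = mu v es * (gap (path_end rg v es) * gap (path_end rg v es)) * 1"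
    using True l r by (simp add: row_unit_def unit_idem_def pad_def mult.assoc)
  also have "\<dots> \<approx> mu v es * gap (path_end rg v es) * 1" using p w by (intro cong_ctx gap_idem free_alg_mu free_alg_1)
  finally show ?thesis using True by (simp add: row_unit_def pad_def)
next
  case False
  have "row_unit Mr v es * unit_idem Mc v' es' = mu v es * vtx (path_end rg v es)"
    using False l r by (simp add: row_unit_def unit_idem_def pad_def)
  also have "\<dots> \<approx> mu v es" using mu_vtx_end[OF p(1)] .
  finally show ?thesis using False by (simp add: row_unit_def pad_def)
qed

lemma unit_idem_col_unit:
  assumes p: "path v es" "path v' es'" and r: "path_end rg v es = path_end rg v' es'"
    and l: "length es < Mr \<longleftrightarrow> length es' < Mc"
  shows "unit_idem Mr v es * col_unit Mc v' es' \<approx> col_unit Mc v' es'"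
proof (cases "length es < Mr")
  case True
  have w: "path_end rg v' es' \<in> V0" using p epath_end by metis
  have "unit_idem Mr v es * col_unit Mc v' es' = 1 * (gap (path_end rg v' es') * gap (path_end rg v' es')) * mu_star v' es'"
    using True l r by (simp add: col_unit_def unit_idem_def pad_def mult.assoc)
  also have "\<dots> \<approx> 1 * gap (path_end rg v' es') * mu_star v' es'" using p w by (intro cong_ctx gap_idem free_alg_mu_star free_alg_1)
  finally show ?thesis using True l by (simp add: col_unit_def pad_def mult.assoc)
next
  case False
  have "unit_idem Mr v es * col_unit Mc v' es' = vtx (path_end rg v' es') * mu_star v' es'"
    using False l r by (simp add: col_unit_def unit_idem_def pad_def)
  also have "\<dots> \<approx> mu_star v' es'" using vtx_end_mu_star[OF p(2)] .
  finally show ?thesis using False l by (simp add: col_unit_def pad_def)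
qed

lemma coeff_Nil_row_unit: "coeff (row_unit M v es) [] = 0"
  by (simp add: row_unit_def mu_def vtx_def coeff_mult_Nil fmono_def)

lemma matrix_form_regular:
  fixes R C :: "('v \<times> 'e list) set" and A :: "'v \<times> 'e list \<Rightarrow> 'v \<times> 'e list \<Rightarrow> 'r"
  assumes vn: "vn_regular_ring TYPE('r)" and fin: "finite R" "finite C"
    and rows: "\<And>p. p \<in> R \<Longrightarrow> path (fst p) (snd p) \<and> set (snd p) \<subseteq> F \<and> length (snd p) \<le> Mr"
    and cols: "\<And>q. q \<in> C \<Longrightarrow> path (fst q) (snd q) \<and> set (snd q) \<subseteq> F \<and> length (snd q) \<le> Mc"
    and compat: "\<And>p q. p \<in> R \<Longrightarrow> q \<in> C \<Longrightarrow> A p q \<noteq> 0 \<Longrightarrow>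
       path_end rg (fst p) (snd p) = path_end rg (fst q) (snd q) \<and> (length (snd p) < Mr \<longleftrightarrow> length (snd q) < Mc)"
  defines "X \<equiv> \<Sum>p\<in>R. \<Sum>q\<in>C. monom (A p q) [] * (row_unit Mr (fst p) (snd p) * col_unit Mc (fst q) (snd q))"
  shows "\<exists>y\<in>free_alg. coeff y [] = 0 \<and> X * y * X \<approx> X"
proof -
  define Ur where "Ur p = row_unit Mr (fst p) (snd p)" for p
  define Ur' where "Ur' p = col_unit Mr (fst p) (snd p)" for p
  define Hr where "Hr p = unit_idem Mr (fst p) (snd p)" for p
  define Uc where "Uc q = row_unit Mc (fst q) (snd q)" for q
  define Uc' where "Uc' q = col_unit Mc (fst q) (snd q)" for q
  define Hc where "Hc q = unit_idem Mc (fst q) (snd q)" for q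
  obtain B where B: "regular_on R C A B" using matrix_regular[OF vn fin] by blast
  define y where "y = (\<Sum>q\<in>C. \<Sum>p\<in>R. monom (B q p) [] * (Uc q * Ur' p))"
  have "y \<in> free_alg" unfolding y_def
    using rows cols by (intro free_alg_sum free_alg_scalar_mult free_alg_mult)
      (auto simp: Uc_def Ur'_def free_alg_row_unit free_alg_col_unit)
  moreover have "coeff y [] = 0" unfolding y_def
    by (simp add: coeff_mult_Nil Uc_def coeff_Nil_row_unit)
  moreover have "X * y * X \<approx> X"
    unfolding X_def y_def Ur_def[symmetric] Uc'_def[symmetric]
  proof (rule matrix_sum_regular[OF fin B])
    fix p assume "p \<in> R"
    then show "Ur p \<in> free_alg" "Ur' p \<in> free_alg" "Hr p \<in> free_alg"
      using rows by (auto simp: Ur_def Ur'_def Hr_def free_alg_row_unit free_alg_col_unit free_alg_unit_idem)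
  next
    fix q assume "q \<in> C"
    then show "Uc q \<in> free_alg" "Uc' q \<in> free_alg" "Hc q \<in> free_alg"
      using cols by (auto simp: Uc_def Uc'_def Hc_def free_alg_row_unit free_alg_col_unit free_alg_unit_idem)
  next
    fix p show "central_coeffs (Ur p)" "central_coeffs (Ur' p)"
      by (simp_all add: Ur_def Ur'_def central_coeffs_row_unit central_coeffs_col_unit)
  next
    fix q show "central_coeffs (Uc' q)" by (simp add: Uc'_def central_coeffs_col_unit)
  next
    fix q q' assume "q \<in> C" "q' \<in> C"
    then show "Uc' q * Uc q' \<approx> (if q = q' then Hc q else 0)"
      using cols unfolding Uc_def Uc'_def Hc_def prod_eq_iff by (intro col_unit_mult_row_unit) auto
  next
    fix p p' assume "p \<in> R" "p' \<in> R"
    then show "Ur' p * Ur p' \<approx> (if p = p' then Hr p else 0)"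
      using rows unfolding Ur_def Ur'_def Hr_def prod_eq_iff by (intro col_unit_mult_row_unit) auto
  next
    fix p q assume pq: "p \<in> R" "q \<in> C" "A p q \<noteq> 0"
    show "Ur p * Hc q \<approx> Ur p" "Hr p * Uc' q \<approx> Uc' q"
      unfolding Ur_def Hc_def Hr_def Uc'_def using rows[OF pq(1)] cols[OF pq(2)] compat[OF pq]
      by (intro row_unit_unit_idem unit_idem_col_unit; blast)+
  qed
  ultimately show ?thesis by blast
qed

lemma sum_mu_mu_star_unit_expansion:
  fixes m :: nat
  assumes paths: "\<And>k. k < m \<Longrightarrow> path (v k) (es k) \<and> path (v' k) (es' k)"
    and ends: "\<And>k. k < m \<Longrightarrow> path_end rg (v k) (es k) = path_end rg (v' k) (es' k)"
    and pad: "\<And>k. k < m \<Longrightarrow> length (es k) + d k = Mr \<and> length (es' k) + d k = Mc"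
  shows "(\<Sum>k<m. monom (c k) [] * (mu (v k) (es k) * mu_star (v' k) (es' k))) \<approx>
    (\<Sum>i\<in>Sigma {..<m} (\<lambda>k. fpaths (path_end rg (v k) (es k)) (d k)).
       monom (c (fst i)) [] * (row_unit Mr (v (fst i)) (es (fst i) @ snd i) * col_unit Mc (v' (fst i)) (es' (fst i) @ snd i)))"
proof -
  have "(\<Sum>k<m. monom (c k) [] * (mu (v k) (es k) * mu_star (v' k) (es' k))) \<approx>
    (\<Sum>k<m. monom (c k) [] * (\<Sum>ks\<in>fpaths (path_end rg (v k) (es k)) (d k).
       row_unit Mr (v k) (es k @ ks) * col_unit Mc (v' k) (es' k @ ks)))"
  proof (rule cong_sum)
    fix k assume "k \<in> {..<m}"
    then show "monom (c k) [] * (mu (v k) (es k) * mu_star (v' k) (es' k)) \<approx>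
        monom (c k) [] * (\<Sum>ks\<in>fpaths (path_end rg (v k) (es k)) (d k).
          row_unit Mr (v k) (es k @ ks) * col_unit Mc (v' k) (es' k @ ks))"
      using paths[of k] ends[of k] pad[of k]
      by (intro cong_mult_left mu_mu_star_unit_expansion) (auto simp: free_alg_monom valid_word_def)
  qed
  also have "\<dots> = (\<Sum>i\<in>Sigma {..<m} (\<lambda>k. fpaths (path_end rg (v k) (es k)) (d k)).
       monom (c (fst i)) [] * (row_unit Mr (v (fst i)) (es (fst i) @ snd i) * col_unit Mc (v' (fst i)) (es' (fst i) @ snd i)))"
    unfolding sum_distrib_left by (subst sum.Sigma) (simp_all add: finite_fpaths case_prod_beta')
  finally show ?thesis .
qed

lemma homogeneous_sum_regular:
  fixes m :: nat and c :: "nat \<Rightarrow> 'r" and v v' :: "nat \<Rightarrow> 'v" and es es' :: "nat \<Rightarrow> 'e list"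
  assumes vn: "vn_regular_ring TYPE('r)"
    and paths: "\<And>k. k < m \<Longrightarrow> path (v k) (es k) \<and> path (v' k) (es' k)"
    and ends: "\<And>k. k < m \<Longrightarrow> path_end rg (v k) (es k) = path_end rg (v' k) (es' k)"
    and degree: "\<And>k. k < m \<Longrightarrow> int (length (es k)) - int (length (es' k)) = n"
    and edges: "\<And>k. k < m \<Longrightarrow> set (es k) \<subseteq> F \<and> set (es' k) \<subseteq> F"
  defines "X \<equiv> \<Sum>k<m. monom (c k) [] * (mu (v k) (es k) * mu_star (v' k) (es' k))"
  shows "\<exists>y\<in>free_alg. coeff y [] = 0 \<and> X * y * X \<approx> X"
proof -
  obtain Mr Mc d where pad: "\<And>k. k < m \<Longrightarrow> length (es k) + d k = Mr \<and> length (es' k) + d k = Mc"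
    using common_padding[of m "\<lambda>k. length (es k)" "\<lambda>k. length (es' k)" n] degree by blast
  define I where "I = Sigma {..<m} (\<lambda>k. fpaths (path_end rg (v k) (es k)) (d k))"
  define row where "row i = (v (fst i), es (fst i) @ snd i)" for i :: "nat \<times> 'e list"
  define col where "col i = (v' (fst i), es' (fst i) @ snd i)" for i :: "nat \<times> 'e list"
  define A where "A p q = (\<Sum>i\<in>{i\<in>I. row i = p \<and> col i = q}. c (fst i))" for p q
  define Xm where "Xm = (\<Sum>p\<in>row ` I. \<Sum>q\<in>col ` I.
    monom (A p q) [] * (row_unit Mr (fst p) (snd p) * col_unit Mc (fst q) (snd q)))"
  have finI: "finite I" unfolding I_def by (intro finite_SigmaI finite_fpaths) auto
  have I_facts: "path (fst (row i)) (snd (row i)) \<and> path (fst (col i)) (snd (col i))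
     \<and> set (snd (row i)) \<subseteq> F \<and> set (snd (col i)) \<subseteq> F
     \<and> length (snd (row i)) \<le> Mr \<and> length (snd (col i)) \<le> Mc
     \<and> path_end rg (fst (row i)) (snd (row i)) = path_end rg (fst (col i)) (snd (col i))
     \<and> (length (snd (row i)) < Mr \<longleftrightarrow> length (snd (col i)) < Mc)" if "i \<in> I" for i
  proof -
    obtain k ks where i: "i = (k, ks)" "k < m" and "ks \<in> fpaths (path_end rg (v k) (es k)) (d k)"
      using \<open>i \<in> I\<close> by (auto simp: I_def)
    then have "set ks \<subseteq> F" "path (path_end rg (v k) (es k)) ks" "length ks \<le> d k"
      by (auto simp: fpaths_def)
    then show ?thesis
      using i paths[of k] ends[of k] edges[of k] pad[of k]
      by (auto simp: row_def col_def epath_append path_end_append)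
  qed
  have "X \<approx> (\<Sum>i\<in>I. monom (c (fst i)) [] *
      (row_unit Mr (fst (row i)) (snd (row i)) * col_unit Mc (fst (col i)) (snd (col i))))"
    unfolding X_def I_def row_def col_def fst_conv snd_conv using paths ends pad by (rule sum_mu_mu_star_unit_expansion)
  also have "\<dots> = Xm"
    unfolding Xm_def A_def by (rule sum_scalar_regroup[OF finI])
  finally have X: "X \<approx> Xm" .
  have "\<exists>y\<in>free_alg. coeff y [] = 0 \<and> Xm * y * Xm \<approx> Xm"
    unfolding Xm_def
  proof (rule matrix_form_regular[OF vn])
    show "finite (row ` I)" "finite (col ` I)" using finI by simp_all
    show "path (fst p) (snd p) \<and> set (snd p) \<subseteq> F \<and> length (snd p) \<le> Mr" if "p \<in> row ` I" for p
      using that I_facts by blast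
    show "path (fst q) (snd q) \<and> set (snd q) \<subseteq> F \<and> length (snd q) \<le> Mc" if "q \<in> col ` I" for q
      using that I_facts by blast
  next
    fix p q assume "A p q \<noteq> 0"
    then obtain i where "i \<in> I" "row i = p" "col i = q"
      unfolding A_def by (metis (mono_tags, lifting) empty_Collect_eq sum.empty)
    then show "path_end rg (fst p) (snd p) = path_end rg (fst q) (snd q) \<and> (length (snd p) < Mr \<longleftrightarrow> length (snd q) < Mc)"
      using I_facts by blast
  qed
  then show ?thesis using regular_cong[OF X] by blast
qed

end

section \<open>Homogeneous components of the canonical grading\<close>

definition homogeneous_pair ::
  "'v set \<Rightarrow> 'e set \<Rightarrow> ('e \<Rightarrow> 'v) \<Rightarrow> ('e \<Rightarrow> 'v) \<Rightarrow> ('v \<Rightarrow> 'i sg) \<Rightarrow> ('e \<Rightarrow> 'i sg) \<Rightarrow> 'i sg \<Rightarrow>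
    'v \<times> 'e list \<Rightarrow> 'v \<times> 'e list \<Rightarrow> bool" where
  "homogeneous_pair V0 E1 rg sc wv we \<sigma> \<mu> \<eta> \<longleftrightarrow> \<sigma> \<noteq> None \<and>
     is_path V0 E1 rg sc \<mu> \<and> is_path V0 E1 rg sc \<eta> \<and> prange rg \<mu> = prange rg \<eta> \<and>
     smult (pweight wv we \<mu>) (sinv (pweight wv we \<eta>)) = \<sigma>"

lemma LPA_hom_sum:
  assumes "x \<in> LPA_hom V0 E1 rg sc wv we \<sigma>"
  shows "\<exists>(m::nat) c \<mu> \<eta>. Series x = (\<Sum>k<m. monom (c k) (pword (\<mu> k) @ pghost (\<eta> k))) \<and>
    (\<forall>k<m. homogeneous_pair V0 E1 rg sc wv we \<sigma> (\<mu> k) (\<eta> k))"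
  using assms
proof (induction rule: LPA_hom.induct)
  case zero
  have "Series (\<lambda>_. 0) = (\<Sum>k<0::nat. monom (c k) (pword (\<mu> k) @ pghost (\<eta> k)))" for c \<mu> \<eta>
    by (simp add: zero_nc_series_def)
  then show ?case by blast
next
  case (mono \<mu>0 \<eta>0 h c0)
  then obtain m :: nat and c \<mu> \<eta> where h: "Series h = (\<Sum>k<m. monom (c k) (pword (\<mu> k) @ pghost (\<eta> k)))"
    and terms: "\<forall>k<m. homogeneous_pair V0 E1 rg sc wv we \<sigma> (\<mu> k) (\<eta> k)" by blast
  have "Series (fadd (fmono c0 (pword \<mu>0 @ pghost \<eta>0)) h) =
      (\<Sum>k<Suc m. monom ((c(m := c0)) k) (pword ((\<mu>(m := \<mu>0)) k) @ pghost ((\<eta>(m := \<eta>0)) k)))"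
  proof -
    have "Series (fadd (fmono c0 (pword \<mu>0 @ pghost \<eta>0)) h) = monom c0 (pword \<mu>0 @ pghost \<eta>0) + Series h"
      by (simp add: fadd_def plus_nc_series_def monom_def)
    then show ?thesis by (simp add: h add.commute)
  qed
  moreover have "\<forall>k<Suc m. homogeneous_pair V0 E1 rg sc wv we \<sigma> ((\<mu>(m := \<mu>0)) k) ((\<eta>(m := \<eta>0)) k)"
    using terms mono.hyps by (auto simp: homogeneous_pair_def less_Suc_eq)
  ultimately show ?case by blast
qed

lemma is_path_imp_epath:
  assumes E: "\<forall>e\<in>E1. sc e \<in> V0 \<and> rg e \<in> V0"
  shows "is_path V0 E1 rg sc (v, es) \<Longrightarrow> epath V0 E1 rg sc v es"
proof (induction es arbitrary: v)
  case Nil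
  then show ?case by (simp add: is_path_def)
next
  case (Cons e es)
  have h: "v \<in> V0" "e \<in> E1" "set es \<subseteq> E1" "sc e = v"
    "\<And>i. Suc i < Suc (length es) \<Longrightarrow> rg ((e # es) ! i) = sc ((e # es) ! Suc i)"
    using Cons.prems by (auto simp: is_path_def)
  have "is_path V0 E1 rg sc (rg e, es)"
    unfolding is_path_def
  proof (simp, intro conjI allI impI)
    show "rg e \<in> V0" using E h by auto
    show "set es \<subseteq> E1" using h by simp
    assume "es \<noteq> []"
    then show "sc (hd es) = rg e" using h(5)[of 0] by (cases es) auto
  next
    fix i assume "Suc i < length es"
    then show "rg (es ! i) = sc (es ! Suc i)" using h(5)[of "Suc i"] by simp
  qed
  then show ?case using Cons.IH h by simp
qed

lemma prange_eq_path_end: "prange rg (v, es) = path_end rg v es"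
proof (induction es arbitrary: v)
  case Nil then show ?case by (simp add: prange_def)
next
  case (Cons e es)
  then show ?case by (cases es) (auto simp: prange_def)
qed

lemma smult_SomeD: "smult x y = Some (i, a, l) \<Longrightarrow> \<exists>a1 a2 j. x = Some (i, a1, j) \<and> y = Some (j, a2, l) \<and> a = a1 + a2"
  by (induction x y rule: smult.induct) (auto split: if_splits)

lemma sinv_SomeD: "sinv x = Some (i, a, l) \<Longrightarrow> x = Some (l, - a, i)"
  by (cases x rule: sinv.cases) auto

lemma foldr_weight_length:
  assumes cw: "canonical_weight V0 E1 rg sc wv we"
  shows "set es \<subseteq> E1 \<Longrightarrow> foldr (\<lambda>e acc. smult (we e) acc) es z = Some (i, a, j) \<Longrightarrow>
     \<exists>i' b j'. z = Some (i', b, j') \<and> a = b + int (length es)"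
proof (induction es arbitrary: i a j)
  case Nil then show ?case by auto
next
  case (Cons e es)
  obtain a1 a2 j1 where s: "we e = Some (i, a1, j1)" "foldr (\<lambda>e acc. smult (we e) acc) es z = Some (j1, a2, j)"
    "a = a1 + a2"
    using smult_SomeD[of "we e" "foldr (\<lambda>e acc. smult (we e) acc) es z" i a j] Cons.prems by auto
  have "a1 = 1" using cw Cons.prems s(1) unfolding canonical_weight_def by fastforce
  moreover obtain i' b j' where "z = Some (i', b, j')" "a2 = b + int (length es)"
    using Cons.IH[OF _ s(2)] Cons.prems by auto
  ultimately show ?case using s by auto
qed

lemma pweight_length:
  assumes cw: "canonical_weight V0 E1 rg sc wv we" and v: "v \<in> V0" and es: "set es \<subseteq> E1"
    and pw: "pweight wv we (v, es) = Some (i, a, j)"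
  shows "a = int (length es)"
proof (cases "es = []")
  case True
  then show ?thesis using pw cw v unfolding pweight_def canonical_weight_def by fastforce
next
  case False
  then have f: "foldr (\<lambda>e acc. smult (we e) acc) (butlast es) (we (last es)) = Some (i, a, j)"
    using pw by (simp add: pweight_def)
  have bl: "set (butlast es) \<subseteq> E1" using es by (meson in_set_butlastD subset_iff)
  obtain i' b j' where z: "we (last es) = Some (i', b, j')" "a = b + int (length (butlast es))"
    using foldr_weight_length[OF cw bl f] by blast
  have "last es \<in> E1" using es False by auto
  then have "b = 1" using cw z(1) unfolding canonical_weight_def by fastforce
  then show ?thesis using z False by (cases es) auto
qed

lemma homogeneous_pair_length_diff:
  assumes cw: "canonical_weight V0 E1 rg sc wv we"
    and hp: "homogeneous_pair V0 E1 rg sc wv we \<sigma> (v, es) (v', es')"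
  shows "int (length es) - int (length es') = fst (snd (the \<sigma>))"
proof -
  have paths: "v \<in> V0" "set es \<subseteq> E1" "v' \<in> V0" "set es' \<subseteq> E1"
    using hp by (auto simp: homogeneous_pair_def is_path_def)
  obtain i n j where \<sigma>: "\<sigma> = Some (i, n, j)"
    using hp by (cases \<sigma>) (auto simp: homogeneous_pair_def)
  then obtain a1 a2 l where w: "pweight wv we (v, es) = Some (i, a1, l)"
      "sinv (pweight wv we (v', es')) = Some (l, a2, j)" "n = a1 + a2"
    using hp smult_SomeD unfolding homogeneous_pair_def by metis
  have "a1 = int (length es)" using pweight_length[OF cw paths(1,2) w(1)] .
  moreover have "- a2 = int (length es')" using pweight_length[OF cw paths(3,4) sinv_SomeD[OF w(2)]] .
  ultimately show ?thesis using \<sigma> w(3) by simp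
qed

context lpa
begin

lemma monom_pword: "path v es \<Longrightarrow> monom 1 (pword (v, es)) \<approx> mu v es"
proof (cases es)
  case Nil
  assume p: "path v es"
  have "monom 1 (pword (v, es)) = mu v es" using Nil by (simp add: pword_def mu_def vtx_def)
  then show ?thesis using free_alg_mu[OF p] cong_refl by metis
next
  case (Cons e es')
  assume p: "path v es"
  have e: "e \<in> E1" "sc e = v" "path (rg e) es'" using p Cons by auto
  have "monom 1 (pword (v, es)) = 1 * edge e * edge_path es'" using Cons by (simp add: pword_def edge_path_def edge_def monom_mult)
  also have "\<dots> \<approx> 1 * (vtx v * edge e) * edge_path es'"
    using e cong_sym[OF src_vtx_edge[OF e(1)]] by (intro cong_ctx) (auto simp: free_alg_1 free_alg_edge_path epath_edges)
  also have "\<dots> = mu v es" using Cons by (simp add: mu_def edge_path_Cons mult.assoc)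
  finally show ?thesis .
qed

lemma monom_pghost: "path v es \<Longrightarrow> monom 1 (pghost (v, es)) \<approx> mu_star v es"
proof (cases es)
  case Nil
  assume p: "path v es"
  have "monom 1 (pghost (v, es)) = mu_star v es" using Nil by (simp add: pghost_def mu_star_def vtx_def)
  then show ?thesis using free_alg_mu_star[OF p] cong_refl by metis
next
  case (Cons e es')
  assume p: "path v es"
  have e: "e \<in> E1" "sc e = v" "path (rg e) es'" using p Cons by auto
  have "monom 1 (pghost (v, es)) = ghost_path es' * ghost e * 1" using Cons by (simp add: pghost_def ghost_path_def ghost_def monom_mult)
  also have "\<dots> \<approx> ghost_path es' * (ghost e * vtx v) * 1"
    using e cong_sym[OF ghost_src_vtx[OF e(1)]] by (intro cong_ctx) (auto simp: free_alg_1 free_alg_ghost_path epath_edges)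
  also have "\<dots> = mu_star v es" using Cons by (simp add: mu_star_def ghost_path_Cons mult.assoc)
  finally show ?thesis .
qed

lemma monom_pword_pghost: "path v es \<Longrightarrow> path v' es' \<Longrightarrow>
   monom c (pword (v, es) @ pghost (v', es')) \<approx> monom c [] * (mu v es * mu_star v' es')"
proof -
  assume p: "path v es" "path v' es'"
  have "monom c (pword (v, es) @ pghost (v', es')) = monom c [] * (monom 1 (pword (v, es)) * monom 1 (pghost (v', es')))"
    by (simp add: monom_mult)
  also have "\<dots> \<approx> monom c [] * (mu v es * mu_star v' es')"
    using p by (intro cong_mult_left cong_mult monom_pword monom_pghost) (auto simp: free_alg_monom valid_word_def)
  finally show ?thesis .
qed

lemma homogeneous_combination_regular:
  fixes \<mu> \<eta> :: "nat \<Rightarrow> 'v \<times> 'e list" and c :: "nat \<Rightarrow> 'r"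
  assumes vn: "vn_regular_ring TYPE('r)"
    and terms: "\<And>k. k < m \<Longrightarrow> is_path V0 E1 rg sc (\<mu> k) \<and> is_path V0 E1 rg sc (\<eta> k) \<and>
       prange rg (\<mu> k) = prange rg (\<eta> k) \<and> int (length (snd (\<mu> k))) - int (length (snd (\<eta> k))) = n"
  defines "X \<equiv> \<Sum>k<m. monom (c k) (pword (\<mu> k) @ pghost (\<eta> k))"
  shows "\<exists>y\<in>free_alg. coeff y [] = 0 \<and> X * y * X \<approx> X"
proof -
  have paths: "path (fst (\<mu> k)) (snd (\<mu> k)) \<and> path (fst (\<eta> k)) (snd (\<eta> k))" if "k < m" for k
    using terms[OF that] is_path_imp_epath[OF edges_in_V0] by (metis prod.collapse)
  have ends: "path_end rg (fst (\<mu> k)) (snd (\<mu> k)) = path_end rg (fst (\<eta> k)) (snd (\<eta> k))" if "k < m" for k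
    using terms[OF that] by (metis prange_eq_path_end prod.collapse)
  define F where "F = (\<Union>k<m. set (snd (\<mu> k)) \<union> set (snd (\<eta> k)))"
  have "finite F" "F \<subseteq> E1" unfolding F_def using paths epath_edges by blast+
  then interpret lpa_fin V0 E1 rg sc rty F by unfold_locales
  define X' where "X' = (\<Sum>k<m. monom (c k) [] *
      (mu (fst (\<mu> k)) (snd (\<mu> k)) * mu_star (fst (\<eta> k)) (snd (\<eta> k))))"
  have "X \<approx> X'" unfolding X_def X'_def
  proof (rule cong_sum)
    fix k assume "k \<in> {..<m}"
    then show "monom (c k) (pword (\<mu> k) @ pghost (\<eta> k)) \<approx>
        monom (c k) [] * (mu (fst (\<mu> k)) (snd (\<mu> k)) * mu_star (fst (\<eta> k)) (snd (\<eta> k)))"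
      using paths monom_pword_pghost[of "fst (\<mu> k)" "snd (\<mu> k)" "fst (\<eta> k)" "snd (\<eta> k)" "c k"]
      by simp
  qed
  moreover have "\<exists>y\<in>free_alg. coeff y [] = 0 \<and> X' * y * X' \<approx> X'"
    unfolding X'_def
  proof (rule homogeneous_sum_regular[OF vn])
    fix k assume "k < m"
    then show "path (fst (\<mu> k)) (snd (\<mu> k)) \<and> path (fst (\<eta> k)) (snd (\<eta> k))"
      "path_end rg (fst (\<mu> k)) (snd (\<mu> k)) = path_end rg (fst (\<eta> k)) (snd (\<eta> k))"
      "int (length (snd (\<mu> k))) - int (length (snd (\<eta> k))) = n"
      "set (snd (\<mu> k)) \<subseteq> F \<and> set (snd (\<eta> k)) \<subseteq> F"
      using paths ends terms by (auto simp: F_def)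
  qed
  ultimately show ?thesis using regular_cong by blast
qed

(* L_R(E) is non-unital: its representatives have no constant term. *)
lemma LPA_regular_if_regular_mod_ideal:
  assumes "Series x * y * Series x \<approx> Series x" "y \<in> free_alg" "coeff y [] = 0"
  shows "\<exists>y\<in>LPA_carrier V0 E1. fdiff x (fmult (fmult x y) x) \<in> LPA_ideal V0 E1 rg sc"
proof
  show "coeff y \<in> LPA_carrier V0 E1"
    using assms(2,3) unfolding LPA_carrier_def free_alg_def valid_word_def by auto
  have "Series x - Series x * y * Series x \<in> rel_ideal"
    using cong_sym[OF assms(1)] by (simp add: cong_def)
  then show "fdiff x (fmult (fmult x (coeff y)) x) \<in> LPA_ideal V0 E1 rg sc"
    by (simp add: rel_ideal_def fdiff_def minus_nc_series_def coeff_mult)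
qed

end

theorem proposition5p16:
  fixes V0 :: "'v set" and E1 :: "'e set" and rg sc :: "'e \<Rightarrow> 'v"
    and wv :: "'v \<Rightarrow> 'i sg" and we :: "'e \<Rightarrow> 'i sg"
  assumes "vn_regular_ring TYPE('r::ring_1)"
    and "\<forall>e\<in>E1. sc e \<in> V0 \<and> rg e \<in> V0"
    and "canonical_weight V0 E1 rg sc wv we"
  shows "\<forall>\<sigma>. \<forall>x \<in> (LPA_hom V0 E1 rg sc wv we \<sigma> :: (('v, 'e) gen list \<Rightarrow> 'r) set).
           \<exists>y \<in> LPA_carrier V0 E1. fdiff x (fmult (fmult x y) x) \<in> LPA_ideal V0 E1 rg sc"
proof (intro allI ballI)
  fix \<sigma> and x :: "('v, 'e) gen list \<Rightarrow> 'r"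
  assume "x \<in> LPA_hom V0 E1 rg sc wv we \<sigma>"
  then obtain m :: nat and c \<mu> \<eta> where x: "Series x = (\<Sum>k<m. monom (c k) (pword (\<mu> k) @ pghost (\<eta> k)))"
    and terms: "\<forall>k<m. homogeneous_pair V0 E1 rg sc wv we \<sigma> (\<mu> k) (\<eta> k)"
    using LPA_hom_sum by blast
  interpret lpa V0 E1 rg sc "TYPE('r)" using assms(2) by unfold_locales
  have "\<exists>y\<in>free_alg. coeff y [] = 0 \<and> Series x * y * Series x \<approx> Series x"
    unfolding x
  proof (rule homogeneous_combination_regular[OF assms(1)])
    fix k assume "k < m"
    then show "is_path V0 E1 rg sc (\<mu> k) \<and> is_path V0 E1 rg sc (\<eta> k) \<and> prange rg (\<mu> k) = prange rg (\<eta> k) \<and>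
        int (length (snd (\<mu> k))) - int (length (snd (\<eta> k))) = fst (snd (the \<sigma>))"
      using terms homogeneous_pair_length_diff[OF assms(3), of \<sigma> "fst (\<mu> k)" "snd (\<mu> k)" "fst (\<eta> k)" "snd (\<eta> k)"]
      by (simp add: homogeneous_pair_def)
  qed
  then show "\<exists>y\<in>LPA_carrier V0 E1. fdiff x (fmult (fmult x y) x) \<in> LPA_ideal V0 E1 rg sc"
    using LPA_regular_if_regular_mod_ideal by blast
qed

end
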